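(* Every pre-Hilbert $*$-category $\mathcal{C}$ is uniquely a $\mathbb{Q}$-linear category, that is, there is a unique way to equip each hom-set of $\mathcal{C}$ with the structure of a $\mathbb{Q}$-vector space (extending its abelian group structure) such that composition is bilinear. Additionally, $(fq)^* = f^* q$ for all morphisms $f$ and all $q\in\mathbb{Q}$.
   Context: A $*$-category is a category with a choice of $f^*\colon Y\to X$ for each $f\colon X\to Y$ such that $1^*=1$, $(gf)^*=f^*g^*$, $(f^* )^*=f$. A pre-Hilbert $*$-category is a $*$-category with (R1) a zero object, (R2) orthonormal biproducts of all pairs of objects (biproducts $(X,s_1,r_1,s_2,r_2)$ with $r_k=s_k^*$), (R3) an isometric kernel (kernel $m$ with $m^*m=1$) for every morphism, and (R4) every diagonal $\Delta\colon X\to X\oplus X$ a kernel of some morphism. Such a category is additive, hence uniquely enriched in abelian groups via its biproducts. *)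

theory Defs
  imports Complex_Main
begin

record ('o, 'm) star_cat =
  Ob  :: "'o set"
  Ar  :: "'m set"
  Dom :: "'m \<Rightarrow> 'o"
  Cod :: "'m \<Rightarrow> 'o"
  cmp :: "'m \<Rightarrow> 'm \<Rightarrow> 'm"   (* cmp C g f = g \<circ> f *)
  idt :: "'o \<Rightarrow> 'm"
  star :: "'m \<Rightarrow> 'm"

definition hom :: "('o, 'm) star_cat \<Rightarrow> 'o \<Rightarrow> 'o \<Rightarrow> 'm set" where
  "hom C X Y = {f \<in> Ar C. Dom C f = X \<and> Cod C f = Y}"

definition category :: "('o, 'm) star_cat \<Rightarrow> bool" where
  "category C \<longleftrightarrow>
     (\<forall>f \<in> Ar C. Dom C f \<in> Ob C \<and> Cod C f \<in> Ob C) \<and>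
     (\<forall>X \<in> Ob C. idt C X \<in> hom C X X) \<and>
     (\<forall>f \<in> Ar C. \<forall>g \<in> Ar C. Cod C f = Dom C g \<longrightarrow>
         cmp C g f \<in> hom C (Dom C f) (Cod C g)) \<and>
     (\<forall>f \<in> Ar C. \<forall>g \<in> Ar C. \<forall>h \<in> Ar C. Cod C f = Dom C g \<longrightarrow> Cod C g = Dom C h \<longrightarrow>
         cmp C h (cmp C g f) = cmp C (cmp C h g) f) \<and>
     (\<forall>f \<in> Ar C. cmp C f (idt C (Dom C f)) = f \<and> cmp C (idt C (Cod C f)) f = f)"

definition star_category :: "('o, 'm) star_cat \<Rightarrow> bool" where
  "star_category C \<longleftrightarrow> category C \<and>
     (\<forall>f \<in> Ar C. star C f \<in> hom C (Cod C f) (Dom C f)) \<and>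
     (\<forall>X \<in> Ob C. star C (idt C X) = idt C X) \<and>
     (\<forall>f \<in> Ar C. \<forall>g \<in> Ar C. Cod C f = Dom C g \<longrightarrow>
         star C (cmp C g f) = cmp C (star C f) (star C g)) \<and>
     (\<forall>f \<in> Ar C. star C (star C f) = f)"

definition zero_object :: "('o, 'm) star_cat \<Rightarrow> 'o \<Rightarrow> bool" where
  "zero_object C Z \<longleftrightarrow> Z \<in> Ob C \<and>
     (\<forall>X \<in> Ob C. (\<exists>!f. f \<in> hom C X Z) \<and> (\<exists>!f. f \<in> hom C Z X))"

definition zero_mor :: "('o, 'm) star_cat \<Rightarrow> 'o \<Rightarrow> 'o \<Rightarrow> 'm \<Rightarrow> bool" where
  "zero_mor C X Y z \<longleftrightarrow> z \<in> hom C X Y \<and>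
     (\<exists>Z a b. zero_object C Z \<and> a \<in> hom C X Z \<and> b \<in> hom C Z Y \<and> z = cmp C b a)"

definition biproduct ::
  "('o, 'm) star_cat \<Rightarrow> 'o \<Rightarrow> 'o \<Rightarrow> 'o \<Rightarrow> 'm \<Rightarrow> 'm \<Rightarrow> 'm \<Rightarrow> 'm \<Rightarrow> bool" where
  "biproduct C A1 A2 X s1 r1 s2 r2 \<longleftrightarrow>
     X \<in> Ob C \<and>
     s1 \<in> hom C A1 X \<and> s2 \<in> hom C A2 X \<and> r1 \<in> hom C X A1 \<and> r2 \<in> hom C X A2 \<and>
     cmp C r1 s1 = idt C A1 \<and> cmp C r2 s2 = idt C A2 \<and>
     zero_mor C A2 A1 (cmp C r1 s2) \<and> zero_mor C A1 A2 (cmp C r2 s1) \<and>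
     (\<forall>W \<in> Ob C. \<forall>f1 \<in> hom C W A1. \<forall>f2 \<in> hom C W A2.
        \<exists>!h. h \<in> hom C W X \<and> cmp C r1 h = f1 \<and> cmp C r2 h = f2) \<and>
     (\<forall>W \<in> Ob C. \<forall>f1 \<in> hom C A1 W. \<forall>f2 \<in> hom C A2 W.
        \<exists>!h. h \<in> hom C X W \<and> cmp C h s1 = f1 \<and> cmp C h s2 = f2)"

definition orthonormal_biproduct ::
  "('o, 'm) star_cat \<Rightarrow> 'o \<Rightarrow> 'o \<Rightarrow> 'o \<Rightarrow> 'm \<Rightarrow> 'm \<Rightarrow> bool" where
  "orthonormal_biproduct C A1 A2 X s1 s2 \<longleftrightarrow>
     biproduct C A1 A2 X s1 (star C s1) s2 (star C s2)"

definition kernel :: "('o, 'm) star_cat \<Rightarrow> 'm \<Rightarrow> 'm \<Rightarrow> bool" where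
  "kernel C f m \<longleftrightarrow> f \<in> Ar C \<and> m \<in> Ar C \<and> Cod C m = Dom C f \<and>
     zero_mor C (Dom C m) (Cod C f) (cmp C f m) \<and>
     (\<forall>g \<in> Ar C. Cod C g = Dom C f \<longrightarrow> zero_mor C (Dom C g) (Cod C f) (cmp C f g) \<longrightarrow>
        (\<exists>!h. h \<in> hom C (Dom C g) (Dom C m) \<and> cmp C m h = g))"

definition isometry :: "('o, 'm) star_cat \<Rightarrow> 'm \<Rightarrow> bool" where
  "isometry C m \<longleftrightarrow> cmp C (star C m) m = idt C (Dom C m)"

definition pre_hilbert :: "('o, 'm) star_cat \<Rightarrow> bool" where
  "pre_hilbert C \<longleftrightarrow> star_category C \<and>
     (\<exists>Z. zero_object C Z) \<and>
     (\<forall>A1 \<in> Ob C. \<forall>A2 \<in> Ob C. \<exists>X s1 s2. orthonormal_biproduct C A1 A2 X s1 s2) \<and>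
     (\<forall>f \<in> Ar C. \<exists>m. kernel C f m \<and> isometry C m) \<and>
     (\<forall>X \<in> Ob C. \<forall>B s1 s2 d. orthonormal_biproduct C X X B s1 s2 \<longrightarrow>
        d \<in> hom C X B \<longrightarrow> cmp C (star C s1) d = idt C X \<longrightarrow> cmp C (star C s2) d = idt C X \<longrightarrow>
        (\<exists>f \<in> Ar C. kernel C f d))"

definition ab_group_on :: "'m set \<Rightarrow> ('m \<Rightarrow> 'm \<Rightarrow> 'm) \<Rightarrow> bool" where
  "ab_group_on H add \<longleftrightarrow>
     (\<forall>x \<in> H. \<forall>y \<in> H. add x y \<in> H) \<and>
     (\<forall>x \<in> H. \<forall>y \<in> H. \<forall>z \<in> H. add (add x y) z = add x (add y z)) \<and>
     (\<forall>x \<in> H. \<forall>y \<in> H. add x y = add y x) \<and>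
     (\<exists>e \<in> H. (\<forall>x \<in> H. add e x = x) \<and> (\<forall>x \<in> H. \<exists>y \<in> H. add x y = e))"

definition ab_enriched :: "('o, 'm) star_cat \<Rightarrow> ('m \<Rightarrow> 'm \<Rightarrow> 'm) \<Rightarrow> bool" where
  "ab_enriched C add \<longleftrightarrow>
     (\<forall>X \<in> Ob C. \<forall>Y \<in> Ob C. ab_group_on (hom C X Y) add) \<and>
     (\<forall>X \<in> Ob C. \<forall>Y \<in> Ob C. \<forall>Z \<in> Ob C.
        \<forall>f \<in> hom C X Y. \<forall>f' \<in> hom C X Y. \<forall>g \<in> hom C Y Z. \<forall>g' \<in> hom C Y Z.
          cmp C g (add f f') = add (cmp C g f) (cmp C g f') \<and>
          cmp C (add g g') f = add (cmp C g f) (cmp C g' f))"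

definition rat_vector_space_on ::
  "'m set \<Rightarrow> ('m \<Rightarrow> 'm \<Rightarrow> 'm) \<Rightarrow> (rat \<Rightarrow> 'm \<Rightarrow> 'm) \<Rightarrow> bool" where
  "rat_vector_space_on H add smul \<longleftrightarrow> ab_group_on H add \<and>
     (\<forall>q. \<forall>x \<in> H. smul q x \<in> H) \<and>
     (\<forall>x \<in> H. smul 1 x = x) \<and>
     (\<forall>a b. \<forall>x \<in> H. smul (a * b) x = smul a (smul b x)) \<and>
     (\<forall>a b. \<forall>x \<in> H. smul (a + b) x = add (smul a x) (smul b x)) \<and>
     (\<forall>a. \<forall>x \<in> H. \<forall>y \<in> H. smul a (add x y) = add (smul a x) (smul a y))"

definition rat_linear :: "('o, 'm) star_cat \<Rightarrow> ('m \<Rightarrow> 'm \<Rightarrow> 'm) \<Rightarrow> (rat \<Rightarrow> 'm \<Rightarrow> 'm) \<Rightarrow> bool" where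
  "rat_linear C add smul \<longleftrightarrow> ab_enriched C add \<and>
     (\<forall>X \<in> Ob C. \<forall>Y \<in> Ob C. rat_vector_space_on (hom C X Y) add smul) \<and>
     (\<forall>X \<in> Ob C. \<forall>Y \<in> Ob C. \<forall>Z \<in> Ob C. \<forall>f \<in> hom C X Y. \<forall>g \<in> hom C Y Z. \<forall>q.
        cmp C g (smul q f) = smul q (cmp C g f) \<and> cmp C (smul q g) f = smul q (cmp C g f))"

end

(* Any addition of parallel arrows that makes composition bilinear is forced to be
   f + g = [f, g] o diag, and by an Eckmann-Hilton argument this formula does define a
   commutative-monoid enrichment; being unique, it commutes with the adjoint.
   Negatives come from (R4): if n is the isometric kernel of the codiagonal of X + X and
   a, b are its two components, then a + b = 0, and a has a right inverse w because the
   diagonal is a kernel; hence b w is a negative of the identity of X.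
   Division comes from (R3): the isometric kernel of [-b, 1] is a copy of the graph of b,
   which makes 1 + b* b invertible. As (k + 1) 1 = 1 + c* c for c = (1, ..., 1) : X -> X^k,
   every positive multiple of an identity is invertible. So every hom-group is uniquely
   divisible, hence uniquely a Q-vector space, and the group homomorphisms given by
   composition and by the adjoint commute with rational multiples. *)

theory Submission
  imports Defs "HOL-Algebra.Group"
begin

section \<open>Rational powers in uniquely divisible abelian groups\<close>

definition uniquely_divisible :: "('a, 'b) monoid_scheme \<Rightarrow> bool" where
  "uniquely_divisible G \<longleftrightarrow>
     (\<forall>n::int. n > 0 \<longrightarrow> bij_betw (\<lambda>x. x [^]\<^bsub>G\<^esub> n) (carrier G) (carrier G))"

definition rat_pow :: "('a, 'b) monoid_scheme \<Rightarrow> rat \<Rightarrow> 'a \<Rightarrow> 'a" where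
  "rat_pow G q x =
     (THE y. y \<in> carrier G \<and> y [^]\<^bsub>G\<^esub> snd (quotient_of q) = x [^]\<^bsub>G\<^esub> fst (quotient_of q))"

lemma rat_as_fraction:
  fixes q :: rat
  obtains a b :: int where "b > 0" "q = of_int a / of_int b"
  using quotient_of_denom_pos quotient_of_div by (cases "quotient_of q") blast

context comm_group
begin

lemma ab_group_on_carrier: "ab_group_on (carrier G) (\<otimes>)"
proof -
  have "\<exists>e \<in> carrier G. (\<forall>x \<in> carrier G. e \<otimes> x = x) \<and> (\<forall>x \<in> carrier G. \<exists>y \<in> carrier G. x \<otimes> y = e)"
    by (intro bexI[of _ \<one>]) (auto intro: bexI[of _ "inv _"])
  then show ?thesis unfolding ab_group_on_def using m_assoc m_comm by auto
qed

lemma int_pow_inj: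
  fixes n :: int
  assumes "uniquely_divisible G" "n > 0" "x \<in> carrier G" "y \<in> carrier G" "x [^] n = y [^] n"
  shows "x = y"
proof -
  have "inj_on (\<lambda>x. x [^] n) (carrier G)"
    using assms(1,2) unfolding uniquely_divisible_def bij_betw_def by blast
  then show ?thesis using assms(3-5) by (auto dest: inj_onD)
qed

lemma int_pow_root_ex:
  fixes n :: int
  assumes "uniquely_divisible G" "n > 0" "x \<in> carrier G"
  obtains y where "y \<in> carrier G" "y [^] n = x"
proof -
  have "(\<lambda>x. x [^] n) ` carrier G = carrier G"
    using assms(1,2) unfolding uniquely_divisible_def bij_betw_def by blast
  then show ?thesis using assms(3) that by (metis imageE)
qed

lemma int_pow_pow_swap:
  fixes m n :: int
  shows "x \<in> carrier G \<Longrightarrow> (x [^] m) [^] n = (x [^] n) [^] m"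
  by (simp add: int_pow_pow mult.commute)

lemma rat_pow_closed_power:
  fixes a b :: int
  assumes ud: "uniquely_divisible G" and x: "x \<in> carrier G"
    and b: "b > 0" and q: "q = of_int a / of_int b"
  shows "rat_pow G q x \<in> carrier G" "rat_pow G q x [^] b = x [^] a"
proof -
  obtain a0 b0 where q0: "quotient_of q = (a0, b0)" by (cases "quotient_of q")
  have b0: "b0 > 0" using quotient_of_denom_pos[OF q0] .
  have "of_int a / of_int b = (of_int a0 / of_int b0 :: rat)" using q quotient_of_div[OF q0] by simp
  then have cross: "a * b0 = a0 * b" using b b0 by (simp add: frac_eq_eq) (metis of_int_eq_iff of_int_mult)
  obtain y0 where y0: "y0 \<in> carrier G" "y0 [^] b0 = x [^] a0"
    using int_pow_root_ex[OF ud b0, of "x [^] a0"] x by auto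
  have "rat_pow G q x = y0"
    unfolding rat_pow_def q0 using y0 int_pow_inj[OF ud b0] by (intro the_equality) auto
  moreover have "y0 [^] b = x [^] a"
  proof (rule int_pow_inj[OF ud b0])
    have "(y0 [^] b) [^] b0 = (x [^] a0) [^] b" using int_pow_pow_swap y0 by metis
    also have "\<dots> = (x [^] a) [^] b0" using x cross by (simp add: int_pow_pow)
    finally show "(y0 [^] b) [^] b0 = (x [^] a) [^] b0" .
  qed (use y0 x in auto)
  ultimately show "rat_pow G q x \<in> carrier G" "rat_pow G q x [^] b = x [^] a" using y0 by auto
qed

lemma rat_pow_unique:
  fixes a b :: int
  assumes ud: "uniquely_divisible G" and x: "x \<in> carrier G" and y: "y \<in> carrier G"
    and b: "b > 0" and q: "q = of_int a / of_int b" and "y [^] b = x [^] a"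
  shows "rat_pow G q x = y"
  using rat_pow_closed_power[OF ud x b q] assms int_pow_inj[OF ud b] by metis

lemma rat_pow_closed: "uniquely_divisible G \<Longrightarrow> x \<in> carrier G \<Longrightarrow> rat_pow G q x \<in> carrier G"
  by (metis rat_as_fraction rat_pow_closed_power(1))

lemma rat_pow_of_int:
  assumes "uniquely_divisible G" "x \<in> carrier G"
  shows "rat_pow G (of_int k) x = x [^] k"
  using rat_pow_unique[OF assms, of "x [^] k" 1 _ k] assms by simp

lemma rat_pow_add:
  assumes ud: "uniquely_divisible G" and x: "x \<in> carrier G"
  shows "rat_pow G (p + q) x = rat_pow G p x \<otimes> rat_pow G q x"
proof -
  obtain a1 b1 where p: "b1 > 0" "p = of_int a1 / of_int b1" by (rule rat_as_fraction)
  obtain a2 b2 where q: "b2 > 0" "q = of_int a2 / of_int b2" by (rule rat_as_fraction)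
  define y z where "y = rat_pow G p x" and "z = rat_pow G q x"
  note y = rat_pow_closed_power[OF ud x p, folded y_def]
  note z = rat_pow_closed_power[OF ud x q, folded z_def]
  have "(y \<otimes> z) [^] (b1 * b2) = (y [^] b1) [^] b2 \<otimes> (z [^] b2) [^] b1"
    using y(1) z(1) by (simp add: int_pow_distrib int_pow_pow mult.commute)
  also have "\<dots> = x [^] (a1 * b2 + a2 * b1)"
    using y(2) z(2) x by (simp add: int_pow_pow int_pow_mult)
  finally have "(y \<otimes> z) [^] (b1 * b2) = x [^] (a1 * b2 + a2 * b1)" .
  moreover have "p + q = of_int (a1 * b2 + a2 * b1) / of_int (b1 * b2)" using p q by (simp add: field_simps)
  ultimately show ?thesis using y z p q unfolding y_def z_def by (intro rat_pow_unique[OF ud x]) simp_all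
qed

lemma rat_pow_mult:
  assumes ud: "uniquely_divisible G" and x: "x \<in> carrier G"
  shows "rat_pow G (p * q) x = rat_pow G p (rat_pow G q x)"
proof -
  obtain a1 b1 where p: "b1 > 0" "p = of_int a1 / of_int b1" by (rule rat_as_fraction)
  obtain a2 b2 where q: "b2 > 0" "q = of_int a2 / of_int b2" by (rule rat_as_fraction)
  define y where "y = rat_pow G q x"
  define z where "z = rat_pow G p y"
  note y = rat_pow_closed_power[OF ud x q, folded y_def]
  note z = rat_pow_closed_power[OF ud y(1) p, folded z_def]
  have "z [^] (b1 * b2) = (z [^] b1) [^] b2" using z(1) by (simp add: int_pow_pow)
  also have "\<dots> = (y [^] b2) [^] a1" using z(2) int_pow_pow_swap[OF y(1)] by simp
  also have "\<dots> = x [^] (a1 * a2)" using x y(2) by (simp add: int_pow_pow mult.commute)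
  finally show ?thesis using z p q unfolding y_def z_def by (intro rat_pow_unique[OF ud x]) simp_all
qed

lemma rat_pow_distrib:
  assumes ud: "uniquely_divisible G" and x: "x \<in> carrier G" and y: "y \<in> carrier G"
  shows "rat_pow G q (x \<otimes> y) = rat_pow G q x \<otimes> rat_pow G q y"
proof -
  obtain a b where q: "b > 0" "q = of_int a / of_int b" by (rule rat_as_fraction)
  note x' = rat_pow_closed_power[OF ud x q] and y' = rat_pow_closed_power[OF ud y q]
  have "(rat_pow G q x \<otimes> rat_pow G q y) [^] b = (x \<otimes> y) [^] a"
    using x y x' y' by (simp add: int_pow_distrib)
  then show ?thesis using x y x' y' q by (intro rat_pow_unique[OF ud]) simp_all
qed

lemma hom_rat_pow:
  assumes ud: "uniquely_divisible G" and H: "comm_group H" "uniquely_divisible H"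
    and h: "h \<in> Group.hom G H" and x: "x \<in> carrier G"
  shows "h (rat_pow G q x) = rat_pow H q (h x)"
proof -
  interpret H: comm_group H by fact
  obtain a b where q: "b > 0" "q = of_int a / of_int b" by (rule rat_as_fraction)
  note y = rat_pow_closed_power[OF ud x q]
  have hom_pow: "h (z [^] k) = h z [^]\<^bsub>H\<^esub> k" if "z \<in> carrier G" for z and k :: int
    using hom_int_pow[OF h that] is_group H.is_group by simp
  have "h (rat_pow G q x) [^]\<^bsub>H\<^esub> b = h x [^]\<^bsub>H\<^esub> a"
    using y x by (simp flip: hom_pow)
  then show ?thesis using h x y q by (intro H.rat_pow_unique[OF H(2), symmetric]) (auto simp: hom_def)
qed

lemma rat_vector_space_on_rat_pow:
  assumes "uniquely_divisible G"
  shows "rat_vector_space_on (carrier G) (\<otimes>) (rat_pow G)"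
proof -
  have "rat_pow G 1 x = x" if "x \<in> carrier G" for x
    using rat_pow_of_int[OF assms that, of 1] that by simp
  then show ?thesis
    unfolding rat_vector_space_on_def
    using assms ab_group_on_carrier rat_pow_closed rat_pow_mult rat_pow_add rat_pow_distrib by simp
qed

lemma rat_vector_space_on_smult_of_int:
  assumes v: "rat_vector_space_on (carrier G) (\<otimes>) s" and x: "x \<in> carrier G"
  shows "s (of_int k) x = x [^] k"
proof -
  have closed: "\<And>q z. z \<in> carrier G \<Longrightarrow> s q z \<in> carrier G"
    and one: "s 1 x = x" and add: "\<And>a b. s (a + b) x = s a x \<otimes> s b x"
    using v x unfolding rat_vector_space_on_def by blast+
  have zero: "s 0 x = \<one>"
    using add[of 0 0] l_cancel_one[OF closed[OF x] closed[OF x], of 0 0] by simp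
  have nat: "s (of_nat n) x = x [^] n" for n
  proof (induction n)
    case (Suc n)
    have "s (of_nat (Suc n)) x = s (of_nat n) x \<otimes> s 1 x" using add[of "of_nat n" 1] by (simp add: add.commute)
    then show ?case using Suc one by simp
  qed (simp add: zero)
  show ?thesis
  proof (cases "k \<ge> 0")
    case True
    then obtain n where "k = int n" using nonneg_int_cases by blast
    then show ?thesis using nat[of n] by (simp add: int_pow_int)
  next
    case False
    define n where "n = nat (- k)"
    have k: "k = - int n" using False unfolding n_def by simp
    have "s (of_int k) x \<otimes> x [^] n = s (of_int k + of_nat n) x" using add nat by simp
    also have "\<dots> = \<one>" using k zero by simp
    finally have "inv (x [^] n) = s (of_int k) x" using inv_equality closed x by simp
    then show ?thesis using k int_pow_neg_int x by simp
  qed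
qed

lemma rat_vector_space_on_unique:
  assumes ud: "uniquely_divisible G" and v: "rat_vector_space_on (carrier G) (\<otimes>) s"
    and x: "x \<in> carrier G"
  shows "s q x = rat_pow G q x"
proof -
  obtain a b where q: "b > 0" "q = of_int a / of_int b" by (rule rat_as_fraction)
  have closed: "s q x \<in> carrier G" and mult: "s (of_int b * q) x = s (of_int b) (s q x)"
    using v x unfolding rat_vector_space_on_def by blast+
  have "s q x [^] b = x [^] a"
    using q mult rat_vector_space_on_smult_of_int[OF v] closed x by simp
  then show ?thesis using rat_pow_unique[OF ud x closed q] by simp
qed

end


locale pre_hilbert_cat =
  fixes C :: "('o, 'm) star_cat"
  assumes pre_hilbert: "pre_hilbert C"
begin

abbreviation comp (infixr "\<cdot>" 70) where "g \<cdot> f \<equiv> cmp C g f"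
abbreviation adj ("_\<^sup>\<dagger>" [1000] 1000) where "f\<^sup>\<dagger> \<equiv> star C f"
abbreviation src where "src f \<equiv> Dom C f"
abbreviation trg where "trg f \<equiv> Cod C f"
abbreviation Hom where "Hom X Y \<equiv> Defs.hom C X Y"
abbreviation par where "par f g \<equiv> f \<in> Ar C \<and> g \<in> Ar C \<and> src g = src f \<and> trg g = trg f"

lemma star_category: "star_category C"
  using pre_hilbert unfolding pre_hilbert_def by auto

lemma category: "category C"
  using star_category unfolding star_category_def by auto

lemma mem_Hom_iff [simp]: "f \<in> Hom X Y \<longleftrightarrow> f \<in> Ar C \<and> src f = X \<and> trg f = Y"
  by (simp add: Defs.hom_def)

lemma src_in_Ob [simp]: "f \<in> Ar C \<Longrightarrow> src f \<in> Ob C"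
  and trg_in_Ob [simp]: "f \<in> Ar C \<Longrightarrow> trg f \<in> Ob C"
  using category unfolding category_def by auto

lemma comp_in_Ar [simp]: "f \<in> Ar C \<Longrightarrow> g \<in> Ar C \<Longrightarrow> src g = trg f \<Longrightarrow> g \<cdot> f \<in> Ar C"
  and src_comp [simp]: "f \<in> Ar C \<Longrightarrow> g \<in> Ar C \<Longrightarrow> src g = trg f \<Longrightarrow> src (g \<cdot> f) = src f"
  and trg_comp [simp]: "f \<in> Ar C \<Longrightarrow> g \<in> Ar C \<Longrightarrow> src g = trg f \<Longrightarrow> trg (g \<cdot> f) = trg g"
  using category unfolding category_def by auto

lemma comp_assoc:
  assumes "f \<in> Ar C" "g \<in> Ar C" "h \<in> Ar C" "src g = trg f" "src h = trg g"
  shows "(h \<cdot> g) \<cdot> f = h \<cdot> (g \<cdot> f)"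
  using category assms unfolding category_def by metis

lemma idt_in_Ar [simp]: "X \<in> Ob C \<Longrightarrow> idt C X \<in> Ar C"
  and src_idt [simp]: "X \<in> Ob C \<Longrightarrow> src (idt C X) = X"
  and trg_idt [simp]: "X \<in> Ob C \<Longrightarrow> trg (idt C X) = X"
  using category unfolding category_def by auto

lemma comp_idt_left [simp]: "f \<in> Ar C \<Longrightarrow> trg f = Y \<Longrightarrow> idt C Y \<cdot> f = f"
  and comp_idt_right [simp]: "f \<in> Ar C \<Longrightarrow> src f = X \<Longrightarrow> f \<cdot> idt C X = f"
  using category unfolding category_def by auto

lemma adj_in_Ar [simp]: "f \<in> Ar C \<Longrightarrow> f\<^sup>\<dagger> \<in> Ar C"
  and src_adj [simp]: "f \<in> Ar C \<Longrightarrow> src (f\<^sup>\<dagger>) = trg f"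
  and trg_adj [simp]: "f \<in> Ar C \<Longrightarrow> trg (f\<^sup>\<dagger>) = src f"
  and adj_adj [simp]: "f \<in> Ar C \<Longrightarrow> (f\<^sup>\<dagger>)\<^sup>\<dagger> = f"
  and adj_comp [simp]: "f \<in> Ar C \<Longrightarrow> g \<in> Ar C \<Longrightarrow> src g = trg f \<Longrightarrow> (g \<cdot> f)\<^sup>\<dagger> = f\<^sup>\<dagger> \<cdot> g\<^sup>\<dagger>"
  and adj_idt [simp]: "X \<in> Ob C \<Longrightarrow> (idt C X)\<^sup>\<dagger> = idt C X"
  using star_category unfolding star_category_def by auto

definition zero_arr :: "'o \<Rightarrow> 'o \<Rightarrow> 'm" where
  "zero_arr X Y = (SOME z. zero_mor C X Y z)"

lemma zero_object_Ob: "zero_object C Z \<Longrightarrow> Z \<in> Ob C"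
  unfolding zero_object_def by blast

lemma zero_mor_exists:
  assumes "X \<in> Ob C" "Y \<in> Ob C"
  shows "\<exists>z. zero_mor C X Y z"
proof -
  obtain Z where Z: "zero_object C Z" using pre_hilbert unfolding pre_hilbert_def by auto
  obtain a where "a \<in> Hom X Z" using Z assms unfolding zero_object_def by blast
  moreover obtain b where "b \<in> Hom Z Y" using Z assms unfolding zero_object_def by blast
  ultimately have "zero_mor C X Y (b \<cdot> a)" unfolding zero_mor_def using Z by auto
  then show ?thesis by blast
qed

lemma zero_mor_unique:
  assumes "zero_mor C X Y z" "zero_mor C X Y z'"
  shows "z = z'"
proof -
  obtain Z a b where Z: "zero_object C Z" and a: "a \<in> Hom X Z" and b: "b \<in> Hom Z Y"
    and z: "z = b \<cdot> a"
    using assms(1) unfolding zero_mor_def by blast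
  obtain Z' a' b' where Z': "zero_object C Z'" and a': "a' \<in> Hom X Z'" and b': "b' \<in> Hom Z' Y"
    and z': "z' = b' \<cdot> a'"
    using assms(2) unfolding zero_mor_def by blast
  have ZO: "Z \<in> Ob C" "Z' \<in> Ob C" using Z Z' by (simp_all add: zero_object_Ob)
  obtain u where u: "u \<in> Hom Z Z'" using Z' ZO unfolding zero_object_def by blast
  have XY: "X \<in> Ob C" "Y \<in> Ob C" using a b by auto
  have "\<exists>!f. f \<in> Hom X Z'" using Z' XY unfolding zero_object_def by blast
  moreover have "u \<cdot> a \<in> Hom X Z'" using u a by auto
  ultimately have a'u: "a' = u \<cdot> a" using a' by blast
  have "\<exists>!f. f \<in> Hom Z Y" using Z XY unfolding zero_object_def by blast
  moreover have "b' \<cdot> u \<in> Hom Z Y" using u b' by auto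
  ultimately have bu: "b = b' \<cdot> u" using b by blast
  show ?thesis using a'u bu z z' a b u b' comp_assoc[of a u b'] by auto
qed

lemma zero_mor_zero_arr: "X \<in> Ob C \<Longrightarrow> Y \<in> Ob C \<Longrightarrow> zero_mor C X Y (zero_arr X Y)"
  unfolding zero_arr_def by (rule someI_ex, rule zero_mor_exists)

lemma zero_mor_in_Hom:
  assumes "zero_mor C X Y z"
  shows "z \<in> Hom X Y" "X \<in> Ob C" "Y \<in> Ob C"
proof -
  show z: "z \<in> Hom X Y" using assms unfolding zero_mor_def by blast
  then show "X \<in> Ob C" "Y \<in> Ob C" using src_in_Ob[of z] trg_in_Ob[of z] by auto
qed

lemma zero_mor_eq_zero_arr:
  assumes "zero_mor C X Y z"
  shows "z = zero_arr X Y"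
  using zero_mor_unique[OF assms zero_mor_zero_arr[OF zero_mor_in_Hom(2,3)[OF assms]]] .

lemma zero_arr_in_Hom: "X \<in> Ob C \<Longrightarrow> Y \<in> Ob C \<Longrightarrow> zero_arr X Y \<in> Hom X Y"
  by (rule zero_mor_in_Hom(1)[OF zero_mor_zero_arr])

lemma zero_arr_in_Ar [simp]: "X \<in> Ob C \<Longrightarrow> Y \<in> Ob C \<Longrightarrow> zero_arr X Y \<in> Ar C"
  and src_zero_arr [simp]: "X \<in> Ob C \<Longrightarrow> Y \<in> Ob C \<Longrightarrow> src (zero_arr X Y) = X"
  and trg_zero_arr [simp]: "X \<in> Ob C \<Longrightarrow> Y \<in> Ob C \<Longrightarrow> trg (zero_arr X Y) = Y"
  using zero_arr_in_Hom by simp_all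

lemma zero_arr_factors:
  assumes "X \<in> Ob C" "Y \<in> Ob C"
  obtains Z a b where "zero_object C Z" "a \<in> Hom X Z" "b \<in> Hom Z Y" "zero_arr X Y = b \<cdot> a"
  using zero_mor_zero_arr[OF assms] unfolding zero_mor_def by blast

lemma comp_through_zero_object:
  assumes "zero_object C Z" "a \<in> Hom X Z" "b \<in> Hom Z Y"
  shows "b \<cdot> a = zero_arr X Y"
  using assms by (intro zero_mor_eq_zero_arr) (auto simp: zero_mor_def)

lemma comp_zero_arr [simp]:
  assumes "g \<in> Ar C" "src g = Y" "X \<in> Ob C"
  shows "g \<cdot> zero_arr X Y = zero_arr X (trg g)"
proof -
  obtain Z a b where Z: "zero_object C Z" "a \<in> Hom X Z" "b \<in> Hom Z Y" "zero_arr X Y = b \<cdot> a"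
    using zero_arr_factors assms by (metis src_in_Ob)
  then have "g \<cdot> zero_arr X Y = (g \<cdot> b) \<cdot> a" using assms comp_assoc by simp
  then show ?thesis using Z assms by (simp add: comp_through_zero_object)
qed

lemma zero_arr_comp [simp]:
  assumes "f \<in> Ar C" "trg f = Y" "Z \<in> Ob C"
  shows "zero_arr Y Z \<cdot> f = zero_arr (src f) Z"
proof -
  obtain W a b where W: "zero_object C W" "a \<in> Hom Y W" "b \<in> Hom W Z" "zero_arr Y Z = b \<cdot> a"
    using zero_arr_factors assms by (metis trg_in_Ob)
  then have "zero_arr Y Z \<cdot> f = b \<cdot> (a \<cdot> f)" using assms comp_assoc by simp
  then show ?thesis using W assms by (simp add: comp_through_zero_object)
qed

lemma adj_zero_arr [simp]:
  assumes "X \<in> Ob C" "Y \<in> Ob C"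
  shows "(zero_arr X Y)\<^sup>\<dagger> = zero_arr Y X"
proof -
  obtain Z a b where Z: "zero_object C Z" "a \<in> Hom X Z" "b \<in> Hom Z Y" "zero_arr X Y = b \<cdot> a"
    using zero_arr_factors assms by blast
  then have "(zero_arr X Y)\<^sup>\<dagger> = a\<^sup>\<dagger> \<cdot> b\<^sup>\<dagger>" by simp
  then show ?thesis using Z by (simp add: comp_through_zero_object)
qed

lemma orthonormal_biproduct_exists:
  "A1 \<in> Ob C \<Longrightarrow> A2 \<in> Ob C \<Longrightarrow> \<exists>B s1 s2. orthonormal_biproduct C A1 A2 B s1 s2"
  using pre_hilbert unfolding pre_hilbert_def by blast

lemma isometric_kernel_exists: "f \<in> Ar C \<Longrightarrow> \<exists>m. kernel C f m \<and> isometry C m"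
  using pre_hilbert unfolding pre_hilbert_def by blast

lemma kernel_in_Ar:
  assumes "kernel C f m"
  shows "m \<in> Ar C" "trg m = src f" "f \<cdot> m = zero_arr (src m) (trg f)"
  using assms zero_mor_eq_zero_arr unfolding kernel_def by blast+

lemma kernel_factors:
  assumes "kernel C f m" "g \<in> Ar C" "trg g = src f" "f \<cdot> g = zero_arr (src g) (trg f)"
  obtains h where "h \<in> Hom (src g) (src m)" "m \<cdot> h = g"
proof -
  have "f \<in> Ar C" using assms(1) unfolding kernel_def by blast
  then have "zero_mor C (src g) (trg f) (f \<cdot> g)"
    using assms(2,4) zero_mor_zero_arr[of "src g" "trg f"] by simp
  then show ?thesis using assms(1-3) that unfolding kernel_def by blast
qed

end

section \<open>Orthonormal biproducts\<close>

definition biprod_pair :: "('o, 'm) star_cat \<Rightarrow> 'o \<Rightarrow> 'm \<Rightarrow> 'm \<Rightarrow> 'm \<Rightarrow> 'm \<Rightarrow> 'm" where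
  "biprod_pair C B s1 s2 f1 f2 =
     (SOME h. h \<in> Defs.hom C (Dom C f1) B \<and> cmp C (star C s1) h = f1 \<and> cmp C (star C s2) h = f2)"

definition biprod_copair :: "('o, 'm) star_cat \<Rightarrow> 'o \<Rightarrow> 'm \<Rightarrow> 'm \<Rightarrow> 'm \<Rightarrow> 'm \<Rightarrow> 'm" where
  "biprod_copair C B s1 s2 f1 f2 =
     (SOME h. h \<in> Defs.hom C B (Cod C f1) \<and> cmp C h s1 = f1 \<and> cmp C h s2 = f2)"

locale orthonormal_biprod = pre_hilbert_cat +
  fixes A1 A2 B s1 s2
  assumes orthonormal_biprod: "orthonormal_biproduct C A1 A2 B s1 s2"
begin

abbreviation pair where "pair \<equiv> biprod_pair C B s1 s2"
abbreviation copair where "copair \<equiv> biprod_copair C B s1 s2"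

lemma biproduct: "biproduct C A1 A2 B s1 (s1\<^sup>\<dagger>) s2 (s2\<^sup>\<dagger>)"
  using orthonormal_biprod unfolding orthonormal_biproduct_def .

lemma inj_in_Hom: "B \<in> Ob C" "s1 \<in> Hom A1 B" "s2 \<in> Hom A2 B"
  using biproduct unfolding biproduct_def by blast+

lemma biprod_simps [simp]:
  "B \<in> Ob C" "s1 \<in> Ar C" "src s1 = A1" "trg s1 = B" "s2 \<in> Ar C" "src s2 = A2" "trg s2 = B"
  "A1 \<in> Ob C" "A2 \<in> Ob C"
  using inj_in_Hom src_in_Ob[of s1] src_in_Ob[of s2] by simp_all

lemma proj_inj [simp]:
  "s1\<^sup>\<dagger> \<cdot> s1 = idt C A1" "s2\<^sup>\<dagger> \<cdot> s2 = idt C A2"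
  "s1\<^sup>\<dagger> \<cdot> s2 = zero_arr A2 A1" "s2\<^sup>\<dagger> \<cdot> s1 = zero_arr A1 A2"
proof -
  have "s1\<^sup>\<dagger> \<cdot> s1 = idt C A1 \<and> s2\<^sup>\<dagger> \<cdot> s2 = idt C A2 \<and>
     zero_mor C A2 A1 (s1\<^sup>\<dagger> \<cdot> s2) \<and> zero_mor C A1 A2 (s2\<^sup>\<dagger> \<cdot> s1)"
    using biproduct unfolding biproduct_def by blast
  then show "s1\<^sup>\<dagger> \<cdot> s1 = idt C A1" "s2\<^sup>\<dagger> \<cdot> s2 = idt C A2"
    "s1\<^sup>\<dagger> \<cdot> s2 = zero_arr A2 A1" "s2\<^sup>\<dagger> \<cdot> s1 = zero_arr A1 A2"
    using zero_mor_eq_zero_arr by blast+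
qed

lemma proj_inj_comp [simp]:
  assumes "f \<in> Ar C"
  shows "trg f = A1 \<Longrightarrow> s1\<^sup>\<dagger> \<cdot> (s1 \<cdot> f) = f" "trg f = A2 \<Longrightarrow> s2\<^sup>\<dagger> \<cdot> (s2 \<cdot> f) = f"
    "trg f = A2 \<Longrightarrow> s1\<^sup>\<dagger> \<cdot> (s2 \<cdot> f) = zero_arr (src f) A1"
    "trg f = A1 \<Longrightarrow> s2\<^sup>\<dagger> \<cdot> (s1 \<cdot> f) = zero_arr (src f) A2"
  using assms comp_assoc[of f s1 "s1\<^sup>\<dagger>"] comp_assoc[of f s2 "s2\<^sup>\<dagger>"]
    comp_assoc[of f s2 "s1\<^sup>\<dagger>"] comp_assoc[of f s1 "s2\<^sup>\<dagger>"] by simp_all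

lemma pair_ex1:
  "W \<in> Ob C \<Longrightarrow> f1 \<in> Hom W A1 \<Longrightarrow> f2 \<in> Hom W A2 \<Longrightarrow>
     \<exists>!h. h \<in> Hom W B \<and> s1\<^sup>\<dagger> \<cdot> h = f1 \<and> s2\<^sup>\<dagger> \<cdot> h = f2"
  using biproduct unfolding biproduct_def by blast

lemma copair_ex1:
  "W \<in> Ob C \<Longrightarrow> f1 \<in> Hom A1 W \<Longrightarrow> f2 \<in> Hom A2 W \<Longrightarrow>
     \<exists>!h. h \<in> Hom B W \<and> h \<cdot> s1 = f1 \<and> h \<cdot> s2 = f2"
  using biproduct unfolding biproduct_def by blast

lemma arr_eq_by_proj:
  assumes "x \<in> Ar C" "y \<in> Ar C" "trg x = B" "trg y = B" "src y = src x"
    "s1\<^sup>\<dagger> \<cdot> x = s1\<^sup>\<dagger> \<cdot> y" "s2\<^sup>\<dagger> \<cdot> x = s2\<^sup>\<dagger> \<cdot> y"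
  shows "x = y"
proof -
  have "\<exists>!h. h \<in> Hom (src x) B \<and> s1\<^sup>\<dagger> \<cdot> h = s1\<^sup>\<dagger> \<cdot> x \<and> s2\<^sup>\<dagger> \<cdot> h = s2\<^sup>\<dagger> \<cdot> x"
    using assms(1,3) by (intro pair_ex1) simp_all
  moreover have "x \<in> Hom (src x) B" "y \<in> Hom (src x) B" using assms by simp_all
  ultimately show ?thesis using assms(6,7) by metis
qed

lemma arr_eq_by_inj:
  assumes "x \<in> Ar C" "y \<in> Ar C" "src x = B" "src y = B" "trg y = trg x"
    "x \<cdot> s1 = y \<cdot> s1" "x \<cdot> s2 = y \<cdot> s2"
  shows "x = y"
proof -
  have "\<exists>!h. h \<in> Hom B (trg x) \<and> h \<cdot> s1 = x \<cdot> s1 \<and> h \<cdot> s2 = x \<cdot> s2"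
    using assms(1,3) by (intro copair_ex1) simp_all
  moreover have "x \<in> Hom B (trg x)" "y \<in> Hom B (trg x)" using assms by simp_all
  ultimately show ?thesis using assms(6,7) by metis
qed

lemma pair_spec:
  assumes "f1 \<in> Ar C" "f2 \<in> Ar C" "trg f1 = A1" "trg f2 = A2" "src f2 = src f1"
  shows "pair f1 f2 \<in> Ar C" "src (pair f1 f2) = src f1" "trg (pair f1 f2) = B"
    "s1\<^sup>\<dagger> \<cdot> pair f1 f2 = f1" "s2\<^sup>\<dagger> \<cdot> pair f1 f2 = f2"
proof -
  have "\<exists>!h. h \<in> Hom (src f1) B \<and> s1\<^sup>\<dagger> \<cdot> h = f1 \<and> s2\<^sup>\<dagger> \<cdot> h = f2"
    using assms by (intro pair_ex1) simp_all
  then have "pair f1 f2 \<in> Hom (src f1) B \<and> s1\<^sup>\<dagger> \<cdot> pair f1 f2 = f1 \<and> s2\<^sup>\<dagger> \<cdot> pair f1 f2 = f2"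
    unfolding biprod_pair_def by (rule someI_ex[OF ex1_implies_ex])
  then show "pair f1 f2 \<in> Ar C" "src (pair f1 f2) = src f1" "trg (pair f1 f2) = B"
    "s1\<^sup>\<dagger> \<cdot> pair f1 f2 = f1" "s2\<^sup>\<dagger> \<cdot> pair f1 f2 = f2"
    by simp_all
qed

lemma copair_spec:
  assumes "f1 \<in> Ar C" "f2 \<in> Ar C" "src f1 = A1" "src f2 = A2" "trg f2 = trg f1"
  shows "copair f1 f2 \<in> Ar C" "src (copair f1 f2) = B" "trg (copair f1 f2) = trg f1"
    "copair f1 f2 \<cdot> s1 = f1" "copair f1 f2 \<cdot> s2 = f2"
proof -
  have "\<exists>!h. h \<in> Hom B (trg f1) \<and> h \<cdot> s1 = f1 \<and> h \<cdot> s2 = f2"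
    using assms by (intro copair_ex1) simp_all
  then have "copair f1 f2 \<in> Hom B (trg f1) \<and> copair f1 f2 \<cdot> s1 = f1 \<and> copair f1 f2 \<cdot> s2 = f2"
    unfolding biprod_copair_def by (rule someI_ex[OF ex1_implies_ex])
  then show "copair f1 f2 \<in> Ar C" "src (copair f1 f2) = B" "trg (copair f1 f2) = trg f1"
    "copair f1 f2 \<cdot> s1 = f1" "copair f1 f2 \<cdot> s2 = f2"
    by simp_all
qed

lemma pair_unique:
  assumes "h \<in> Ar C" "trg h = B"
  shows "h = pair (s1\<^sup>\<dagger> \<cdot> h) (s2\<^sup>\<dagger> \<cdot> h)"
proof -
  note p = pair_spec[of "s1\<^sup>\<dagger> \<cdot> h" "s2\<^sup>\<dagger> \<cdot> h"]
  have "s1\<^sup>\<dagger> \<cdot> h \<in> Ar C" "s2\<^sup>\<dagger> \<cdot> h \<in> Ar C" "trg (s1\<^sup>\<dagger> \<cdot> h) = A1" "trg (s2\<^sup>\<dagger> \<cdot> h) = A2"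
    "src (s2\<^sup>\<dagger> \<cdot> h) = src (s1\<^sup>\<dagger> \<cdot> h)" "src (s1\<^sup>\<dagger> \<cdot> h) = src h"
    using assms by simp_all
  note p = p[OF this(1-5)]
  show ?thesis by (rule arr_eq_by_proj) (use assms p \<open>src (s1\<^sup>\<dagger> \<cdot> h) = src h\<close> in simp_all)
qed

lemma copair_unique:
  assumes "h \<in> Ar C" "src h = B"
  shows "h = copair (h \<cdot> s1) (h \<cdot> s2)"
proof -
  note p = copair_spec[of "h \<cdot> s1" "h \<cdot> s2"]
  have "h \<cdot> s1 \<in> Ar C" "h \<cdot> s2 \<in> Ar C" "src (h \<cdot> s1) = A1" "src (h \<cdot> s2) = A2"
    "trg (h \<cdot> s2) = trg (h \<cdot> s1)" "trg (h \<cdot> s1) = trg h"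
    using assms by simp_all
  note p = p[OF this(1-5)]
  show ?thesis by (rule arr_eq_by_inj) (use assms p \<open>trg (h \<cdot> s1) = trg h\<close> in simp_all)
qed

lemma pair_eqI:
  assumes "h \<in> Ar C" "trg h = B" "s1\<^sup>\<dagger> \<cdot> h = f1" "s2\<^sup>\<dagger> \<cdot> h = f2"
  shows "h = pair f1 f2"
  using pair_unique[OF assms(1,2)] assms(3,4) by simp

lemma copair_eqI:
  assumes "h \<in> Ar C" "src h = B" "h \<cdot> s1 = f1" "h \<cdot> s2 = f2"
  shows "h = copair f1 f2"
  using copair_unique[OF assms(1,2)] assms(3,4) by simp

end

section \<open>The canonical addition of parallel arrows\<close>

context pre_hilbert_cat
begin

definition doubling :: "'o \<Rightarrow> 'o \<times> 'm \<times> 'm" where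
  "doubling X = (SOME (B, s1, s2). orthonormal_biproduct C X X B s1 s2)"

definition dbl :: "'o \<Rightarrow> 'o" where "dbl X = fst (doubling X)"
definition in1 :: "'o \<Rightarrow> 'm" where "in1 X = fst (snd (doubling X))"
definition in2 :: "'o \<Rightarrow> 'm" where "in2 X = snd (snd (doubling X))"

lemma orthonormal_biprod_dbl:
  assumes "X \<in> Ob C"
  shows "orthonormal_biprod C X X (dbl X) (in1 X) (in2 X)"
proof -
  have "\<exists>t. case t of (B, s1, s2) \<Rightarrow> orthonormal_biproduct C X X B s1 s2"
    using orthonormal_biproduct_exists[OF assms assms] by auto
  then have "case doubling X of (B, s1, s2) \<Rightarrow> orthonormal_biproduct C X X B s1 s2"
    unfolding doubling_def by (rule someI_ex)
  then show ?thesis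
    unfolding dbl_def in1_def in2_def orthonormal_biprod_def orthonormal_biprod_axioms_def
    using pre_hilbert_cat_axioms by (simp split: prod.splits)
qed

abbreviation pair2 where "pair2 X \<equiv> biprod_pair C (dbl X) (in1 X) (in2 X)"
abbreviation copair2 where "copair2 X \<equiv> biprod_copair C (dbl X) (in1 X) (in2 X)"

definition diag :: "'o \<Rightarrow> 'm" where "diag X = pair2 X (idt C X) (idt C X)"
definition codiag :: "'o \<Rightarrow> 'm" where "codiag X = copair2 X (idt C X) (idt C X)"

text \<open>The two candidate sums \<open>[f, g] \<circ> \<Delta>\<close> and \<open>\<nabla> \<circ> \<langle>f, g\<rangle>\<close>; they agree and satisfy an
  interchange law, so an Eckmann--Hilton argument makes them commutative and associative.\<close>

definition sum_copair :: "'m \<Rightarrow> 'm \<Rightarrow> 'm" where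
  "sum_copair f g = copair2 (src f) f g \<cdot> diag (src f)"

definition sum_pair :: "'m \<Rightarrow> 'm \<Rightarrow> 'm" where
  "sum_pair f g = codiag (trg f) \<cdot> pair2 (trg f) f g"

lemma diag_spec:
  assumes "X \<in> Ob C"
  shows "diag X \<in> Ar C" "src (diag X) = X" "trg (diag X) = dbl X"
    "(in1 X)\<^sup>\<dagger> \<cdot> diag X = idt C X" "(in2 X)\<^sup>\<dagger> \<cdot> diag X = idt C X"
proof -
  interpret b: orthonormal_biprod C X X "dbl X" "in1 X" "in2 X" using orthonormal_biprod_dbl[OF assms] .
  show "diag X \<in> Ar C" "src (diag X) = X" "trg (diag X) = dbl X"
    "(in1 X)\<^sup>\<dagger> \<cdot> diag X = idt C X" "(in2 X)\<^sup>\<dagger> \<cdot> diag X = idt C X"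
    unfolding diag_def using b.pair_spec[of "idt C X" "idt C X"] assms by simp_all
qed

lemma codiag_spec:
  assumes "X \<in> Ob C"
  shows "codiag X \<in> Ar C" "src (codiag X) = dbl X" "trg (codiag X) = X"
    "codiag X \<cdot> in1 X = idt C X" "codiag X \<cdot> in2 X = idt C X"
proof -
  interpret b: orthonormal_biprod C X X "dbl X" "in1 X" "in2 X" using orthonormal_biprod_dbl[OF assms] .
  show "codiag X \<in> Ar C" "src (codiag X) = dbl X" "trg (codiag X) = X"
    "codiag X \<cdot> in1 X = idt C X" "codiag X \<cdot> in2 X = idt C X"
    unfolding codiag_def using b.copair_spec[of "idt C X" "idt C X"] assms by simp_all
qed

lemma diag_is_kernel:
  assumes "X \<in> Ob C"
  obtains f where "f \<in> Ar C" "kernel C f (diag X)"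
proof -
  have "orthonormal_biproduct C X X (dbl X) (in1 X) (in2 X)"
    using orthonormal_biprod_dbl[OF assms] unfolding orthonormal_biprod_def orthonormal_biprod_axioms_def
    by blast
  moreover have "diag X \<in> Hom X (dbl X)" using diag_spec[OF assms] by simp
  ultimately show ?thesis
    using pre_hilbert assms diag_spec[OF assms] that unfolding pre_hilbert_def by blast
qed

lemma sum_copair_in_Ar:
  assumes "par f g"
  shows "sum_copair f g \<in> Ar C" "src (sum_copair f g) = src f" "trg (sum_copair f g) = trg f"
proof -
  interpret b: orthonormal_biprod C "src f" "src f" "dbl (src f)" "in1 (src f)" "in2 (src f)"
    using orthonormal_biprod_dbl assms by simp
  show "sum_copair f g \<in> Ar C" "src (sum_copair f g) = src f" "trg (sum_copair f g) = trg f"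
    unfolding sum_copair_def using assms b.copair_spec[of f g] diag_spec[of "src f"] by simp_all
qed

lemma sum_pair_in_Ar:
  assumes "par f g"
  shows "sum_pair f g \<in> Ar C" "src (sum_pair f g) = src f" "trg (sum_pair f g) = trg f"
proof -
  interpret b: orthonormal_biprod C "trg f" "trg f" "dbl (trg f)" "in1 (trg f)" "in2 (trg f)"
    using orthonormal_biprod_dbl assms by simp
  show "sum_pair f g \<in> Ar C" "src (sum_pair f g) = src f" "trg (sum_pair f g) = trg f"
    unfolding sum_pair_def using assms b.pair_spec[of f g] codiag_spec[of "trg f"] by simp_all
qed

lemma sum_copair_zero_arr:
  assumes f: "f \<in> Ar C"
  shows "sum_copair f (zero_arr (src f) (trg f)) = f" "sum_copair (zero_arr (src f) (trg f)) f = f"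
proof -
  let ?X = "src f" and ?Y = "trg f"
  interpret b: orthonormal_biprod C ?X ?X "dbl ?X" "in1 ?X" "in2 ?X" using orthonormal_biprod_dbl f by simp
  note d = diag_spec[of ?X]
  have "f \<cdot> (in1 ?X)\<^sup>\<dagger> = b.copair f (zero_arr ?X ?Y)"
    using b.copair_unique[of "f \<cdot> (in1 ?X)\<^sup>\<dagger>"] f
      comp_assoc[of "in1 ?X" "(in1 ?X)\<^sup>\<dagger>" f] comp_assoc[of "in2 ?X" "(in1 ?X)\<^sup>\<dagger>" f] by simp
  then show "sum_copair f (zero_arr ?X ?Y) = f"
    unfolding sum_copair_def using f d comp_assoc[of "diag ?X" "(in1 ?X)\<^sup>\<dagger>" f] by simp
  have "f \<cdot> (in2 ?X)\<^sup>\<dagger> = b.copair (zero_arr ?X ?Y) f"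
    using b.copair_unique[of "f \<cdot> (in2 ?X)\<^sup>\<dagger>"] f
      comp_assoc[of "in1 ?X" "(in2 ?X)\<^sup>\<dagger>" f] comp_assoc[of "in2 ?X" "(in2 ?X)\<^sup>\<dagger>" f] by simp
  then show "sum_copair (zero_arr ?X ?Y) f = f"
    unfolding sum_copair_def using f d comp_assoc[of "diag ?X" "(in2 ?X)\<^sup>\<dagger>" f] by simp
qed

lemma sum_pair_zero_arr:
  assumes f: "f \<in> Ar C"
  shows "sum_pair f (zero_arr (src f) (trg f)) = f" "sum_pair (zero_arr (src f) (trg f)) f = f"
proof -
  let ?X = "src f" and ?Y = "trg f"
  interpret b: orthonormal_biprod C ?Y ?Y "dbl ?Y" "in1 ?Y" "in2 ?Y" using orthonormal_biprod_dbl f by simp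
  note d = codiag_spec[of ?Y]
  have "in1 ?Y \<cdot> f = b.pair f (zero_arr ?X ?Y)"
    using b.pair_unique[of "in1 ?Y \<cdot> f"] f
      comp_assoc[of f "in1 ?Y" "(in1 ?Y)\<^sup>\<dagger>"] comp_assoc[of f "in1 ?Y" "(in2 ?Y)\<^sup>\<dagger>"] by simp
  then show "sum_pair f (zero_arr ?X ?Y) = f"
    unfolding sum_pair_def using f d comp_assoc[of f "in1 ?Y" "codiag ?Y"] by simp
  have "in2 ?Y \<cdot> f = b.pair (zero_arr ?X ?Y) f"
    using b.pair_unique[of "in2 ?Y \<cdot> f"] f
      comp_assoc[of f "in2 ?Y" "(in1 ?Y)\<^sup>\<dagger>"] comp_assoc[of f "in2 ?Y" "(in2 ?Y)\<^sup>\<dagger>"] by simp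
  then show "sum_pair (zero_arr ?X ?Y) f = f"
    unfolding sum_pair_def using f d comp_assoc[of f "in2 ?Y" "codiag ?Y"] by simp
qed

lemma sum_copair_eq_sum_pair:
  assumes "par f g"
  shows "sum_copair f g = sum_pair f g"
proof -
  let ?X = "src f" and ?Y = "trg f"
  interpret a: orthonormal_biprod C ?X ?X "dbl ?X" "in1 ?X" "in2 ?X" using orthonormal_biprod_dbl assms by simp
  interpret b: orthonormal_biprod C ?Y ?Y "dbl ?Y" "in1 ?Y" "in2 ?Y" using orthonormal_biprod_dbl assms by simp
  have XY: "?X \<in> Ob C" "?Y \<in> Ob C" using assms by simp_all
  have f: "f \<in> Ar C" "g \<in> Ar C" "src g = ?X" "trg g = ?Y" using assms by simp_all
  define M where "M = b.pair (f \<cdot> (in1 ?X)\<^sup>\<dagger>) (g \<cdot> (in2 ?X)\<^sup>\<dagger>)"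
  note Mp = b.pair_spec[of "f \<cdot> (in1 ?X)\<^sup>\<dagger>" "g \<cdot> (in2 ?X)\<^sup>\<dagger>", folded M_def]
  have M: "M \<in> Ar C" "src M = dbl ?X" "trg M = dbl ?Y"
    "(in1 ?Y)\<^sup>\<dagger> \<cdot> M = f \<cdot> (in1 ?X)\<^sup>\<dagger>" "(in2 ?Y)\<^sup>\<dagger> \<cdot> M = g \<cdot> (in2 ?X)\<^sup>\<dagger>"
    using Mp f by simp_all
  note d = diag_spec[OF XY(1)] codiag_spec[OF XY(2)]
  have M1: "M \<cdot> in1 ?X = b.pair f (zero_arr ?X ?Y)"
    by (rule b.pair_eqI)
      (use M f XY comp_assoc[of "in1 ?X" M "(in1 ?Y)\<^sup>\<dagger>"] comp_assoc[of "in1 ?X" M "(in2 ?Y)\<^sup>\<dagger>"]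
        comp_assoc[of "in1 ?X" "(in1 ?X)\<^sup>\<dagger>" f] comp_assoc[of "in1 ?X" "(in2 ?X)\<^sup>\<dagger>" g] in simp_all)
  have M2: "M \<cdot> in2 ?X = b.pair (zero_arr ?X ?Y) g"
    by (rule b.pair_eqI)
      (use M f XY comp_assoc[of "in2 ?X" M "(in1 ?Y)\<^sup>\<dagger>"] comp_assoc[of "in2 ?X" M "(in2 ?Y)\<^sup>\<dagger>"]
        comp_assoc[of "in2 ?X" "(in1 ?X)\<^sup>\<dagger>" f] comp_assoc[of "in2 ?X" "(in2 ?X)\<^sup>\<dagger>" g] in simp_all)
  have zero: "sum_pair f (zero_arr ?X ?Y) = f" "sum_pair (zero_arr ?X ?Y) g = g"
    using sum_pair_zero_arr[of f] sum_pair_zero_arr[of g] f by simp_all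
  have cM: "codiag ?Y \<cdot> M = a.copair f g"
    by (rule a.copair_eqI)
      (use M f XY d M1 M2 zero comp_assoc[of "in1 ?X" M "codiag ?Y"] comp_assoc[of "in2 ?X" M "codiag ?Y"]
        in \<open>simp_all add: sum_pair_def\<close>)
  have Md: "M \<cdot> diag ?X = b.pair f g"
    by (rule b.pair_eqI)
      (use M f XY d comp_assoc[of "diag ?X" M "(in1 ?Y)\<^sup>\<dagger>"] comp_assoc[of "diag ?X" M "(in2 ?Y)\<^sup>\<dagger>"]
        comp_assoc[of "diag ?X" "(in1 ?X)\<^sup>\<dagger>" f] comp_assoc[of "diag ?X" "(in2 ?X)\<^sup>\<dagger>" g] in simp_all)
  show ?thesis
    unfolding sum_copair_def sum_pair_def using cM[symmetric] Md M d comp_assoc[of "diag ?X" M "codiag ?Y"] f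
    by simp
qed

lemma sum_pair_sum_copair_interchange:
  assumes "par a b" "par a c" "par a d"
  shows "sum_copair (sum_pair a b) (sum_pair c d) = sum_pair (sum_copair a c) (sum_copair b d)"
proof -
  let ?X = "src a" and ?Y = "trg a"
  interpret x: orthonormal_biprod C ?X ?X "dbl ?X" "in1 ?X" "in2 ?X" using orthonormal_biprod_dbl assms by simp
  interpret y: orthonormal_biprod C ?Y ?Y "dbl ?Y" "in1 ?Y" "in2 ?Y" using orthonormal_biprod_dbl assms by simp
  have XY: "?X \<in> Ob C" "?Y \<in> Ob C" using assms by simp_all
  have f: "a \<in> Ar C" "b \<in> Ar C" "c \<in> Ar C" "d \<in> Ar C" "src b = ?X" "trg b = ?Y" "src c = ?X"
    "trg c = ?Y" "src d = ?X" "trg d = ?Y"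
    using assms by simp_all
  note ac = x.copair_spec[of a c] and bd = x.copair_spec[of b d]
  define M where "M = y.pair (x.copair a c) (x.copair b d)"
  note Mp = y.pair_spec[of "x.copair a c" "x.copair b d", folded M_def]
  have M: "M \<in> Ar C" "src M = dbl ?X" "trg M = dbl ?Y"
    "(in1 ?Y)\<^sup>\<dagger> \<cdot> M = x.copair a c" "(in2 ?Y)\<^sup>\<dagger> \<cdot> M = x.copair b d"
    using Mp f ac bd by simp_all
  note dd = diag_spec[OF XY(1)] codiag_spec[OF XY(2)]
  have M1: "M \<cdot> in1 ?X = y.pair a b"
    by (rule y.pair_eqI)
      (use M f XY ac bd comp_assoc[of "in1 ?X" M "(in1 ?Y)\<^sup>\<dagger>"] comp_assoc[of "in1 ?X" M "(in2 ?Y)\<^sup>\<dagger>"]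
        in simp_all)
  have M2: "M \<cdot> in2 ?X = y.pair c d"
    by (rule y.pair_eqI)
      (use M f XY ac bd comp_assoc[of "in2 ?X" M "(in1 ?Y)\<^sup>\<dagger>"] comp_assoc[of "in2 ?X" M "(in2 ?Y)\<^sup>\<dagger>"]
        in simp_all)
  have cM: "codiag ?Y \<cdot> M = x.copair (sum_pair a b) (sum_pair c d)"
    by (rule x.copair_eqI)
      (use M f XY dd M1 M2 comp_assoc[of "in1 ?X" M "codiag ?Y"] comp_assoc[of "in2 ?X" M "codiag ?Y"]
        in \<open>simp_all add: sum_pair_def\<close>)
  have Md: "M \<cdot> diag ?X = y.pair (sum_copair a c) (sum_copair b d)"
    by (rule y.pair_eqI)
      (use M f XY dd ac bd comp_assoc[of "diag ?X" M "(in1 ?Y)\<^sup>\<dagger>"] comp_assoc[of "diag ?X" M "(in2 ?Y)\<^sup>\<dagger>"]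
        in \<open>simp_all add: sum_copair_def\<close>)
  have o: "src (sum_pair a b) = ?X" "trg (sum_copair a c) = ?Y"
    using sum_pair_in_Ar[of a b] sum_copair_in_Ar[of a c] f by simp_all
  show ?thesis unfolding sum_copair_def[of "sum_pair a b"] sum_pair_def[of "sum_copair a c"] o
    using cM[symmetric] Md M dd comp_assoc[of "diag ?X" M "codiag ?Y"] f by simp
qed

lemma comp_sum_copair:
  assumes "par f f'" "g \<in> Ar C" "src g = trg f"
  shows "g \<cdot> sum_copair f f' = sum_copair (g \<cdot> f) (g \<cdot> f')"
proof -
  let ?X = "src f"
  interpret x: orthonormal_biprod C ?X ?X "dbl ?X" "in1 ?X" "in2 ?X" using orthonormal_biprod_dbl assms by simp
  note c = x.copair_spec[of f f'] and dd = diag_spec[of ?X]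
  have "g \<cdot> x.copair f f' = x.copair (g \<cdot> f) (g \<cdot> f')"
    by (rule x.copair_eqI)
      (use assms c comp_assoc[of "in1 ?X" "x.copair f f'" g] comp_assoc[of "in2 ?X" "x.copair f f'" g] in simp_all)
  then show ?thesis unfolding sum_copair_def using assms c dd comp_assoc[of "diag ?X" "x.copair f f'" g] by simp
qed

lemma sum_pair_comp:
  assumes "par g g'" "f \<in> Ar C" "src g = trg f"
  shows "sum_pair g g' \<cdot> f = sum_pair (g \<cdot> f) (g' \<cdot> f)"
proof -
  let ?Y = "trg g"
  interpret y: orthonormal_biprod C ?Y ?Y "dbl ?Y" "in1 ?Y" "in2 ?Y" using orthonormal_biprod_dbl assms by simp
  note c = y.pair_spec[of g g'] and dd = codiag_spec[of ?Y]
  have "y.pair g g' \<cdot> f = y.pair (g \<cdot> f) (g' \<cdot> f)"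
    by (rule y.pair_eqI)
      (use assms c comp_assoc[of f "y.pair g g'" "(in1 ?Y)\<^sup>\<dagger>"] comp_assoc[of f "y.pair g g'" "(in2 ?Y)\<^sup>\<dagger>"]
        in simp_all)
  then show ?thesis unfolding sum_pair_def using assms c dd comp_assoc[of f "y.pair g g'" "codiag ?Y"] by simp
qed

lemma sum_copair_interchange:
  assumes "par a b" "par a c" "par a d"
  shows "sum_copair (sum_copair a b) (sum_copair c d) = sum_copair (sum_copair a c) (sum_copair b d)"
  using sum_pair_sum_copair_interchange[OF assms] sum_copair_eq_sum_pair assms sum_copair_in_Ar
  by (metis (no_types, lifting))

lemma sum_copair_commute:
  assumes "par a b"
  shows "sum_copair a b = sum_copair b a"
proof -
  let ?z = "zero_arr (src a) (trg a)"
  have z: "par a ?z" using assms by simp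
  have "sum_copair a b = sum_copair (sum_copair ?z a) (sum_copair b ?z)"
    using sum_copair_zero_arr[of a] sum_copair_zero_arr[of b] assms by simp
  also have "\<dots> = sum_copair (sum_copair ?z b) (sum_copair a ?z)"
    using sum_copair_interchange[of ?z a b ?z] assms z by simp
  also have "\<dots> = sum_copair b a" using sum_copair_zero_arr[of a] sum_copair_zero_arr[of b] assms by simp
  finally show ?thesis .
qed

lemma sum_copair_assoc:
  assumes "par a b" "par a c"
  shows "sum_copair (sum_copair a b) c = sum_copair a (sum_copair b c)"
proof -
  let ?z = "zero_arr (src a) (trg a)"
  have "sum_copair (sum_copair a b) c = sum_copair (sum_copair a b) (sum_copair ?z c)"
    using sum_copair_zero_arr[of c] assms by simp
  also have "\<dots> = sum_copair (sum_copair a ?z) (sum_copair b c)"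
    using sum_copair_interchange[of a b ?z c] assms by simp
  also have "\<dots> = sum_copair a (sum_copair b c)" using sum_copair_zero_arr[of a] assms by simp
  finally show ?thesis .
qed

lemma sum_copair_comp:
  assumes "par g g'" "f \<in> Ar C" "src g = trg f"
  shows "sum_copair g g' \<cdot> f = sum_copair (g \<cdot> f) (g' \<cdot> f)"
  using sum_pair_comp[OF assms] sum_copair_eq_sum_pair assms by simp

end

section \<open>Enrichment in commutative monoids\<close>

locale cmon_enrichment = pre_hilbert_cat C for C :: "('o, 'm) star_cat" +
  fixes add :: "'m \<Rightarrow> 'm \<Rightarrow> 'm" (infixl "\<boxplus>" 65)
  assumes add_in_Ar: "par f g \<Longrightarrow> f \<boxplus> g \<in> Ar C"
    and src_add: "par f g \<Longrightarrow> src (f \<boxplus> g) = src f"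
    and trg_add: "par f g \<Longrightarrow> trg (f \<boxplus> g) = trg f"
    and add_assoc: "par f g \<Longrightarrow> par f h \<Longrightarrow> (f \<boxplus> g) \<boxplus> h = f \<boxplus> (g \<boxplus> h)"
    and add_commute: "par f g \<Longrightarrow> f \<boxplus> g = g \<boxplus> f"
    and zero_arr_add: "f \<in> Ar C \<Longrightarrow> zero_arr (src f) (trg f) \<boxplus> f = f"
    and comp_add: "par f f' \<Longrightarrow> g \<in> Ar C \<Longrightarrow> src g = trg f \<Longrightarrow> g \<cdot> (f \<boxplus> f') = g \<cdot> f \<boxplus> g \<cdot> f'"
    and add_comp: "par g g' \<Longrightarrow> f \<in> Ar C \<Longrightarrow> src g = trg f \<Longrightarrow> (g \<boxplus> g') \<cdot> f = g \<cdot> f \<boxplus> g' \<cdot> f"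

lemma (in pre_hilbert_cat) cmon_enrichment_sum_copair: "cmon_enrichment C sum_copair"
  unfolding cmon_enrichment_def cmon_enrichment_axioms_def
  using sum_copair_in_Ar sum_copair_assoc sum_copair_commute sum_copair_zero_arr comp_sum_copair
    sum_copair_comp pre_hilbert_cat_axioms
  by simp

context cmon_enrichment
begin

declare add_in_Ar [simp] src_add [simp] trg_add [simp]

lemma add_zero_arr [simp]:
  assumes "f \<in> Ar C" "src f = X" "trg f = Y"
  shows "zero_arr X Y \<boxplus> f = f" "f \<boxplus> zero_arr X Y = f"
  using assms zero_arr_add[of f] add_commute[of f "zero_arr X Y"] src_in_Ob[of f] trg_in_Ob[of f]
  by simp_all

lemma biprod_inj_proj_sum:
  assumes "orthonormal_biprod C A1 A2 B s1 s2"
  shows "s1 \<cdot> s1\<^sup>\<dagger> \<boxplus> s2 \<cdot> s2\<^sup>\<dagger> = idt C B"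
proof -
  interpret b: orthonormal_biprod C A1 A2 B s1 s2 by fact
  let ?u = "s1 \<cdot> s1\<^sup>\<dagger> \<boxplus> s2 \<cdot> s2\<^sup>\<dagger>"
  have "s1\<^sup>\<dagger> \<cdot> ?u = s1\<^sup>\<dagger> \<cdot> (s1 \<cdot> s1\<^sup>\<dagger>) \<boxplus> s1\<^sup>\<dagger> \<cdot> (s2 \<cdot> s2\<^sup>\<dagger>)" by (rule comp_add) simp_all
  also have "\<dots> = s1\<^sup>\<dagger>" using b.proj_inj_comp[of "s1\<^sup>\<dagger>"] b.proj_inj_comp[of "s2\<^sup>\<dagger>"] by simp
  finally have 1: "s1\<^sup>\<dagger> \<cdot> ?u = s1\<^sup>\<dagger> \<cdot> idt C B" by simp
  have "s2\<^sup>\<dagger> \<cdot> ?u = s2\<^sup>\<dagger> \<cdot> (s1 \<cdot> s1\<^sup>\<dagger>) \<boxplus> s2\<^sup>\<dagger> \<cdot> (s2 \<cdot> s2\<^sup>\<dagger>)" by (rule comp_add) simp_all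
  also have "\<dots> = s2\<^sup>\<dagger>" using b.proj_inj_comp[of "s1\<^sup>\<dagger>"] b.proj_inj_comp[of "s2\<^sup>\<dagger>"] by simp
  finally have 2: "s2\<^sup>\<dagger> \<cdot> ?u = s2\<^sup>\<dagger> \<cdot> idt C B" by simp
  show ?thesis by (rule b.arr_eq_by_proj) (use 1 2 in simp_all)
qed

lemma add_eq_sum_copair:
  assumes "par f g"
  shows "f \<boxplus> g = sum_copair f g"
proof -
  let ?X = "src f"
  interpret x: orthonormal_biprod C ?X ?X "dbl ?X" "in1 ?X" "in2 ?X" using orthonormal_biprod_dbl assms by simp
  note c = x.copair_spec[of f g] and dd = diag_spec[of ?X]
  let ?k = "x.copair f g" and ?D = "diag ?X"
  have "sum_copair f g = ?k \<cdot> (idt C (dbl ?X) \<cdot> ?D)" unfolding sum_copair_def using dd by simp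
  also have "\<dots> = ?k \<cdot> ((in1 ?X \<cdot> (in1 ?X)\<^sup>\<dagger> \<boxplus> in2 ?X \<cdot> (in2 ?X)\<^sup>\<dagger>) \<cdot> ?D)"
    using biprod_inj_proj_sum[OF orthonormal_biprod_dbl] by simp
  also have "\<dots> = ?k \<cdot> (in1 ?X \<boxplus> in2 ?X)"
    using add_comp[of "in1 ?X \<cdot> (in1 ?X)\<^sup>\<dagger>" "in2 ?X \<cdot> (in2 ?X)\<^sup>\<dagger>" ?D] dd
      comp_assoc[of ?D "(in1 ?X)\<^sup>\<dagger>" "in1 ?X"] comp_assoc[of ?D "(in2 ?X)\<^sup>\<dagger>" "in2 ?X"] by simp
  also have "\<dots> = f \<boxplus> g" using comp_add[of "in1 ?X" "in2 ?X" ?k] c assms by simp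
  finally show ?thesis by simp
qed

end

lemma (in pre_hilbert_cat) cmon_enrichment_unique:
  assumes "cmon_enrichment C add1" "cmon_enrichment C add2" "par f g"
  shows "add1 f g = add2 f g"
  using cmon_enrichment.add_eq_sum_copair[OF assms(1,3)] cmon_enrichment.add_eq_sum_copair[OF assms(2,3)]
  by simp

context cmon_enrichment
begin

lemma cmon_enrichment_adjoint: "cmon_enrichment C (\<lambda>f g. (f\<^sup>\<dagger> \<boxplus> g\<^sup>\<dagger>)\<^sup>\<dagger>)"
proof -
  let ?a = "\<lambda>f g. (f\<^sup>\<dagger> \<boxplus> g\<^sup>\<dagger>)\<^sup>\<dagger>"
  have "g \<cdot> ?a f f' = ?a (g \<cdot> f) (g \<cdot> f')" if "par f f'" "g \<in> Ar C" "src g = trg f" for f f' g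
  proof -
    have "g \<cdot> ?a f f' = ((f\<^sup>\<dagger> \<boxplus> f'\<^sup>\<dagger>) \<cdot> g\<^sup>\<dagger>)\<^sup>\<dagger>" using that by simp
    also have "(f\<^sup>\<dagger> \<boxplus> f'\<^sup>\<dagger>) \<cdot> g\<^sup>\<dagger> = f\<^sup>\<dagger> \<cdot> g\<^sup>\<dagger> \<boxplus> f'\<^sup>\<dagger> \<cdot> g\<^sup>\<dagger>" using that by (intro add_comp) simp_all
    finally show ?thesis using that by simp
  qed
  moreover have "?a g g' \<cdot> f = ?a (g \<cdot> f) (g' \<cdot> f)" if "par g g'" "f \<in> Ar C" "src g = trg f" for f g g'
  proof -
    have "?a g g' \<cdot> f = (f\<^sup>\<dagger> \<cdot> (g\<^sup>\<dagger> \<boxplus> g'\<^sup>\<dagger>))\<^sup>\<dagger>" using that by simp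
    also have "f\<^sup>\<dagger> \<cdot> (g\<^sup>\<dagger> \<boxplus> g'\<^sup>\<dagger>) = f\<^sup>\<dagger> \<cdot> g\<^sup>\<dagger> \<boxplus> f\<^sup>\<dagger> \<cdot> g'\<^sup>\<dagger>" using that by (intro comp_add) simp_all
    finally show ?thesis using that by simp
  qed
  moreover have "?a (?a f g) h = ?a f (?a g h)" if "par f g" "par f h" for f g h
    using that add_assoc[of "f\<^sup>\<dagger>" "g\<^sup>\<dagger>" "h\<^sup>\<dagger>"] by simp
  moreover have "?a f g = ?a g f" if "par f g" for f g
    using that add_commute[of "f\<^sup>\<dagger>" "g\<^sup>\<dagger>"] by simp
  ultimately show ?thesis
    unfolding cmon_enrichment_def cmon_enrichment_axioms_def using pre_hilbert_cat_axioms by simp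
qed

lemma adj_add [simp]:
  assumes "par f g"
  shows "(f \<boxplus> g)\<^sup>\<dagger> = f\<^sup>\<dagger> \<boxplus> g\<^sup>\<dagger>"
proof -
  have "((f\<^sup>\<dagger>)\<^sup>\<dagger> \<boxplus> (g\<^sup>\<dagger>)\<^sup>\<dagger>)\<^sup>\<dagger> = f\<^sup>\<dagger> \<boxplus> g\<^sup>\<dagger>"
    using cmon_enrichment_unique[OF cmon_enrichment_adjoint cmon_enrichment_axioms, of "f\<^sup>\<dagger>" "g\<^sup>\<dagger>"] assms
    by simp
  then show ?thesis using assms by simp
qed

lemma add_inverse_unique:
  assumes "par x p" "par x y" "x \<boxplus> p = zero_arr (src x) (trg x)" "y \<boxplus> p = zero_arr (src x) (trg x)"
  shows "x = y"
proof -
  have "x = x \<boxplus> (p \<boxplus> y)" using assms add_commute[of y p] by simp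
  also have "\<dots> = (x \<boxplus> p) \<boxplus> y" using add_assoc[of x p y] assms(1,2) by simp
  also have "\<dots> = y" using assms by simp
  finally show ?thesis .
qed

context
  fixes A1 A2 B s1 s2
  assumes biprod: "orthonormal_biprod C A1 A2 B s1 s2"
begin

interpretation b: orthonormal_biprod C A1 A2 B s1 s2 by (rule biprod)

lemma biprod_decompose:
  assumes "x \<in> Ar C" "trg x = B"
  shows "x = s1 \<cdot> (s1\<^sup>\<dagger> \<cdot> x) \<boxplus> s2 \<cdot> (s2\<^sup>\<dagger> \<cdot> x)"
proof -
  have "x = (s1 \<cdot> s1\<^sup>\<dagger> \<boxplus> s2 \<cdot> s2\<^sup>\<dagger>) \<cdot> x" using assms biprod_inj_proj_sum[OF biprod] by simp
  also have "\<dots> = (s1 \<cdot> s1\<^sup>\<dagger>) \<cdot> x \<boxplus> (s2 \<cdot> s2\<^sup>\<dagger>) \<cdot> x" using assms by (intro add_comp) simp_all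
  finally show ?thesis using assms comp_assoc[of x "s1\<^sup>\<dagger>" s1] comp_assoc[of x "s2\<^sup>\<dagger>" s2] by simp
qed

lemma biprod_proj_sum:
  assumes "u \<in> Ar C" "v \<in> Ar C" "src v = src u" "trg u = A1" "trg v = A2"
  shows "s1\<^sup>\<dagger> \<cdot> (s1 \<cdot> u \<boxplus> s2 \<cdot> v) = u" "s2\<^sup>\<dagger> \<cdot> (s1 \<cdot> u \<boxplus> s2 \<cdot> v) = v"
proof -
  have "s1\<^sup>\<dagger> \<cdot> (s1 \<cdot> u \<boxplus> s2 \<cdot> v) = s1\<^sup>\<dagger> \<cdot> (s1 \<cdot> u) \<boxplus> s1\<^sup>\<dagger> \<cdot> (s2 \<cdot> v)"
    using assms by (intro comp_add) simp_all
  then show "s1\<^sup>\<dagger> \<cdot> (s1 \<cdot> u \<boxplus> s2 \<cdot> v) = u" using assms by simp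
  have "s2\<^sup>\<dagger> \<cdot> (s1 \<cdot> u \<boxplus> s2 \<cdot> v) = s2\<^sup>\<dagger> \<cdot> (s1 \<cdot> u) \<boxplus> s2\<^sup>\<dagger> \<cdot> (s2 \<cdot> v)"
    using assms by (intro comp_add) simp_all
  then show "s2\<^sup>\<dagger> \<cdot> (s1 \<cdot> u \<boxplus> s2 \<cdot> v) = v" using assms by simp
qed

lemma biprod_adj_comp_self:
  assumes "x \<in> Ar C" "trg x = B"
  shows "x\<^sup>\<dagger> \<cdot> x = (s1\<^sup>\<dagger> \<cdot> x)\<^sup>\<dagger> \<cdot> (s1\<^sup>\<dagger> \<cdot> x) \<boxplus> (s2\<^sup>\<dagger> \<cdot> x)\<^sup>\<dagger> \<cdot> (s2\<^sup>\<dagger> \<cdot> x)"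
proof -
  have "x\<^sup>\<dagger> \<cdot> x = x\<^sup>\<dagger> \<cdot> (s1 \<cdot> (s1\<^sup>\<dagger> \<cdot> x) \<boxplus> s2 \<cdot> (s2\<^sup>\<dagger> \<cdot> x))"
    using arg_cong[OF biprod_decompose[OF assms], of "\<lambda>y. x\<^sup>\<dagger> \<cdot> y"] .
  also have "\<dots> = x\<^sup>\<dagger> \<cdot> (s1 \<cdot> (s1\<^sup>\<dagger> \<cdot> x)) \<boxplus> x\<^sup>\<dagger> \<cdot> (s2 \<cdot> (s2\<^sup>\<dagger> \<cdot> x))"
    using assms by (intro comp_add) simp_all
  also have "x\<^sup>\<dagger> \<cdot> (s1 \<cdot> (s1\<^sup>\<dagger> \<cdot> x)) = (s1\<^sup>\<dagger> \<cdot> x)\<^sup>\<dagger> \<cdot> (s1\<^sup>\<dagger> \<cdot> x)"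
    using assms comp_assoc[of "s1\<^sup>\<dagger> \<cdot> x" s1 "x\<^sup>\<dagger>"] by simp
  also have "x\<^sup>\<dagger> \<cdot> (s2 \<cdot> (s2\<^sup>\<dagger> \<cdot> x)) = (s2\<^sup>\<dagger> \<cdot> x)\<^sup>\<dagger> \<cdot> (s2\<^sup>\<dagger> \<cdot> x)"
    using assms comp_assoc[of "s2\<^sup>\<dagger> \<cdot> x" s2 "x\<^sup>\<dagger>"] by simp
  finally show ?thesis .
qed

end

end

section \<open>Negatives\<close>

definition (in pre_hilbert_cat) monic :: "'m \<Rightarrow> bool" where
  "monic d \<longleftrightarrow> (\<forall>x \<in> Ar C. \<forall>y \<in> Ar C.
     trg x = src d \<longrightarrow> trg y = src d \<longrightarrow> src y = src x \<longrightarrow> d \<cdot> x = d \<cdot> y \<longrightarrow> x = y)"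

context cmon_enrichment
begin

lemma monic_with_add_inverse_exists:
  assumes X: "X \<in> Ob C"
  obtains d Y d' where "d \<in> Hom X Y" "d' \<in> Hom X Y" "d \<boxplus> d' = zero_arr X Y" "monic d"
proof -
  let ?B = "dbl X" and ?s1 = "in1 X" and ?s2 = "in2 X" and ?D = "diag X"
  interpret b: orthonormal_biprod C X X ?B ?s1 ?s2 using orthonormal_biprod_dbl[OF X] .
  note D = diag_spec[OF X]
  obtain f where f: "f \<in> Ar C" "kernel C f ?D" using diag_is_kernel[OF X] by blast
  define Y where "Y = trg f"
  have fB: "src f = ?B" and fD: "f \<cdot> ?D = zero_arr X Y"
    using kernel_in_Ar[OF f(2)] D Y_def by simp_all
  have Ds: "?D = ?s1 \<boxplus> ?s2" using biprod_decompose[OF b.orthonormal_biprod_axioms D(1,3)] D X by simp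
  define d d' where "d = f \<cdot> ?s1" and "d' = f \<cdot> ?s2"
  have d: "d \<in> Hom X Y" "d' \<in> Hom X Y" unfolding d_def d'_def Y_def using f fB by simp_all
  have dd': "d \<boxplus> d' = zero_arr X Y"
    using comp_add[of ?s1 ?s2 f] fD Ds f fB unfolding d_def d'_def by simp
  have "x = y" if xy: "x \<in> Ar C" "y \<in> Ar C" "trg x = X" "trg y = X" "src y = src x" "d \<cdot> x = d \<cdot> y"
    for x y
  proof -
    \<comment> \<open>\<open>\<langle>x, y\<rangle>\<close> is killed by \<open>f\<close>, hence factors through the diagonal\<close>
    define g where "g = ?s1 \<cdot> x \<boxplus> ?s2 \<cdot> y"
    have g: "g \<in> Ar C" "src g = src x" "trg g = ?B" unfolding g_def using xy by simp_all
    have "f \<cdot> g = f \<cdot> (?s1 \<cdot> x) \<boxplus> f \<cdot> (?s2 \<cdot> y)" unfolding g_def using xy f fB by (intro comp_add) simp_all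
    also have "\<dots> = d \<cdot> x \<boxplus> d' \<cdot> y"
      unfolding d_def d'_def using xy f fB comp_assoc[of x ?s1 f] comp_assoc[of y ?s2 f] by simp
    also have "\<dots> = d \<cdot> y \<boxplus> d' \<cdot> y" using xy(6) by simp
    also have "\<dots> = (d \<boxplus> d') \<cdot> y" using xy d by (intro add_comp[symmetric]) simp_all
    finally have "f \<cdot> g = zero_arr (src g) (trg f)" using dd' xy g d f Y_def by simp
    then obtain h where h: "h \<in> Hom (src g) (src ?D)" "?D \<cdot> h = g"
      using kernel_factors[OF f(2) g(1)] g fB by auto
    have "x = (?s1\<^sup>\<dagger> \<cdot> ?D) \<cdot> h" "y = (?s2\<^sup>\<dagger> \<cdot> ?D) \<cdot> h"
      using biprod_proj_sum[OF b.orthonormal_biprod_axioms, of x y] xy h D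
        comp_assoc[of h ?D "?s1\<^sup>\<dagger>"] comp_assoc[of h ?D "?s2\<^sup>\<dagger>"]
      unfolding g_def by simp_all
    then show "x = y" using D h by simp
  qed
  then show ?thesis using that[of d Y d'] d dd' unfolding monic_def by auto
qed

lemma isometric_kernel_codiag:
  assumes biprod: "orthonormal_biprod C X X B s1 s2"
    and n: "kernel C (s1\<^sup>\<dagger> \<boxplus> s2\<^sup>\<dagger>) n" "isometry C n"
  defines "a \<equiv> s1\<^sup>\<dagger> \<cdot> n" and "b \<equiv> s2\<^sup>\<dagger> \<cdot> n"
  shows "a \<boxplus> b = zero_arr (src n) X" "(a\<^sup>\<dagger> \<boxplus> a\<^sup>\<dagger>) \<cdot> a = idt C (src n)"
proof -
  interpret o: orthonormal_biprod C X X B s1 s2 by fact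
  let ?N = "src n"
  have n1: "n \<in> Ar C" "trg n = B" "(s1\<^sup>\<dagger> \<boxplus> s2\<^sup>\<dagger>) \<cdot> n = zero_arr ?N X" "n\<^sup>\<dagger> \<cdot> n = idt C ?N"
    using kernel_in_Ar[OF n(1)] n(2) unfolding isometry_def by simp_all
  have N: "?N \<in> Ob C" using n1 by simp
  have ab: "a \<in> Hom ?N X" "b \<in> Hom ?N X" unfolding a_def b_def using n1 by simp_all
  show ab0: "a \<boxplus> b = zero_arr ?N X"
    using add_comp[of "s1\<^sup>\<dagger>" "s2\<^sup>\<dagger>" n] n1 unfolding a_def b_def by simp
  have sq: "idt C ?N = a\<^sup>\<dagger> \<cdot> a \<boxplus> b\<^sup>\<dagger> \<cdot> b"
    using biprod_adj_comp_self[OF biprod n1(1,2)] n1 unfolding a_def b_def by simp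
  \<comment> \<open>both \<open>a\<^sup>\<dagger> \<cdot> a\<close> and \<open>b\<^sup>\<dagger> \<cdot> b\<close> are additive inverses of \<open>a\<^sup>\<dagger> \<cdot> b\<close>\<close>
  have "a\<^sup>\<dagger> \<cdot> a \<boxplus> a\<^sup>\<dagger> \<cdot> b = zero_arr ?N ?N"
    using comp_add[of a b "a\<^sup>\<dagger>"] ab0 ab N by simp
  moreover have "b\<^sup>\<dagger> \<cdot> b \<boxplus> a\<^sup>\<dagger> \<cdot> b = zero_arr ?N ?N"
  proof -
    have "a\<^sup>\<dagger> \<boxplus> b\<^sup>\<dagger> = zero_arr X ?N" using adj_add[of a b] ab0 ab N by simp
    then have "a\<^sup>\<dagger> \<cdot> b \<boxplus> b\<^sup>\<dagger> \<cdot> b = zero_arr ?N ?N" using add_comp[of "a\<^sup>\<dagger>" "b\<^sup>\<dagger>" b] ab N by simp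
    then show ?thesis using add_commute[of "a\<^sup>\<dagger> \<cdot> b" "b\<^sup>\<dagger> \<cdot> b"] ab by simp
  qed
  ultimately have "a\<^sup>\<dagger> \<cdot> a = b\<^sup>\<dagger> \<cdot> b" using add_inverse_unique[of "a\<^sup>\<dagger> \<cdot> a" "a\<^sup>\<dagger> \<cdot> b" "b\<^sup>\<dagger> \<cdot> b"] ab by simp
  then show "(a\<^sup>\<dagger> \<boxplus> a\<^sup>\<dagger>) \<cdot> a = idt C ?N" using sq add_comp[of "a\<^sup>\<dagger>" "a\<^sup>\<dagger>" a] ab by simp
qed

lemma idt_add_inverse:
  assumes X: "X \<in> Ob C"
  obtains n where "n \<in> Hom X X" "idt C X \<boxplus> n = zero_arr X X"
proof -
  let ?B = "dbl X" and ?s1 = "in1 X" and ?s2 = "in2 X"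
  have biprod: "orthonormal_biprod C X X ?B ?s1 ?s2" using orthonormal_biprod_dbl[OF X] .
  interpret o: orthonormal_biprod C X X ?B ?s1 ?s2 by (rule biprod)
  obtain d Y d' where d: "d \<in> Hom X Y" "d' \<in> Hom X Y" "d \<boxplus> d' = zero_arr X Y" "monic d"
    by (rule monic_with_add_inverse_exists[OF X])
  have Y: "Y \<in> Ob C" using d by (metis mem_Hom_iff trg_in_Ob)
  let ?q = "?s1\<^sup>\<dagger> \<boxplus> ?s2\<^sup>\<dagger>"
  have q: "?q \<in> Hom ?B X" by simp
  obtain n where n: "kernel C ?q n" "isometry C n" using isometric_kernel_exists[of ?q] q by auto
  let ?N = "src n"
  have n1: "n \<in> Ar C" "trg n = ?B" using kernel_in_Ar[OF n(1)] by simp_all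
  define a b w where "a = ?s1\<^sup>\<dagger> \<cdot> n" and "b = ?s2\<^sup>\<dagger> \<cdot> n" and "w = a\<^sup>\<dagger> \<boxplus> a\<^sup>\<dagger>"
  have ab: "a \<in> Hom ?N X" "b \<in> Hom ?N X" "w \<in> Hom X ?N" unfolding a_def b_def w_def using n1 by simp_all
  have ab0: "a \<boxplus> b = zero_arr ?N X" and wa: "w \<cdot> a = idt C ?N"
    using isometric_kernel_codiag[OF biprod n] unfolding a_def b_def w_def by simp_all
  \<comment> \<open>\<open>d\<^sup>\<dagger>\<close> factors through \<open>a\<close>, and it is epi because \<open>d\<close> is mono\<close>
  define G where "G = o.pair (d\<^sup>\<dagger>) (d'\<^sup>\<dagger>)"
  have G: "G \<in> Ar C" "src G = Y" "trg G = ?B" "?s1\<^sup>\<dagger> \<cdot> G = d\<^sup>\<dagger>" "?s2\<^sup>\<dagger> \<cdot> G = d'\<^sup>\<dagger>"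
    unfolding G_def using o.pair_spec[of "d\<^sup>\<dagger>" "d'\<^sup>\<dagger>"] d by simp_all
  have "?q \<cdot> G = d\<^sup>\<dagger> \<boxplus> d'\<^sup>\<dagger>" using add_comp[of "?s1\<^sup>\<dagger>" "?s2\<^sup>\<dagger>" G] G by simp
  also have "\<dots> = zero_arr Y X" using adj_add[of d d'] d X Y by simp
  finally obtain u where u: "u \<in> Hom Y ?N" "n \<cdot> u = G"
    using kernel_factors[OF n(1) G(1)] G by auto
  have au: "a \<cdot> u = d\<^sup>\<dagger>" unfolding a_def using u n1 G comp_assoc[of u n "?s1\<^sup>\<dagger>"] by simp
  have "(a \<cdot> w) \<cdot> d\<^sup>\<dagger> = (a \<cdot> w) \<cdot> (a \<cdot> u)" using au by simp
  also have "\<dots> = a \<cdot> ((w \<cdot> a) \<cdot> u)" using ab u by (simp add: comp_assoc)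
  finally have "(a \<cdot> w) \<cdot> d\<^sup>\<dagger> = d\<^sup>\<dagger>" using wa u au by simp
  moreover have "((a \<cdot> w) \<cdot> d\<^sup>\<dagger>)\<^sup>\<dagger> = d \<cdot> (a \<cdot> w)\<^sup>\<dagger>" using ab d by simp
  ultimately have "d \<cdot> (a \<cdot> w)\<^sup>\<dagger> = d \<cdot> idt C X" using d by simp
  then have "(a \<cdot> w)\<^sup>\<dagger> = idt C X" using d(1,4) ab X unfolding monic_def by simp
  then have aw: "a \<cdot> w = idt C X" using adj_adj[of "a \<cdot> w"] ab X by simp
  have "idt C X \<boxplus> b \<cdot> w = (a \<boxplus> b) \<cdot> w" using add_comp[of a b w] ab aw by simp
  then have "idt C X \<boxplus> b \<cdot> w = zero_arr X X" using ab0 ab X by simp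
  then show ?thesis using that[of "b \<cdot> w"] ab by simp
qed

lemma add_inverse_exists:
  assumes "f \<in> Ar C"
  obtains g where "g \<in> Hom (src f) (trg f)" "f \<boxplus> g = zero_arr (src f) (trg f)"
proof -
  obtain n where n: "n \<in> Hom (src f) (src f)" "idt C (src f) \<boxplus> n = zero_arr (src f) (src f)"
    using idt_add_inverse[of "src f"] assms by auto
  have "f \<cdot> (idt C (src f) \<boxplus> n) = f \<boxplus> f \<cdot> n" using comp_add[of "idt C (src f)" n f] n assms by simp
  then show ?thesis using that[of "f \<cdot> n"] n assms by simp
qed

definition hom_group :: "'o \<Rightarrow> 'o \<Rightarrow> 'm monoid" where
  "hom_group X Y = \<lparr>carrier = Hom X Y, mult = add, one = zero_arr X Y\<rparr>"

lemma hom_group_simps [simp]: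
  "carrier (hom_group X Y) = Hom X Y" "mult (hom_group X Y) = add" "one (hom_group X Y) = zero_arr X Y"
  unfolding hom_group_def by simp_all

lemma comm_group_hom_group:
  assumes "X \<in> Ob C" "Y \<in> Ob C"
  shows "comm_group (hom_group X Y)"
proof (rule comm_groupI)
  fix x assume "x \<in> carrier (hom_group X Y)"
  then obtain g where "g \<in> Hom X Y" "x \<boxplus> g = zero_arr X Y" using add_inverse_exists[of x] by auto
  then show "\<exists>y \<in> carrier (hom_group X Y). y \<otimes>\<^bsub>hom_group X Y\<^esub> x = \<one>\<^bsub>hom_group X Y\<^esub>"
    using add_commute[of x g] \<open>x \<in> carrier (hom_group X Y)\<close> by auto
qed (use assms add_assoc add_commute in auto)

end

section \<open>Unique divisibility of the hom-groups\<close>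

lemma (in pre_hilbert_cat) inverse_of_adj_congruent_idt:
  assumes E: "E \<in> Hom X X" "E\<^sup>\<dagger> = E" and t: "t \<in> Hom K X" "t' \<in> Hom X K"
    and tt': "t \<cdot> t' = idt C X" and tEt: "t\<^sup>\<dagger> \<cdot> (E \<cdot> t) = idt C K"
  shows "(t \<cdot> t\<^sup>\<dagger>) \<cdot> E = idt C X" "E \<cdot> (t \<cdot> t\<^sup>\<dagger>) = idt C X"
proof -
  have "t\<^sup>\<dagger> \<cdot> E = (t\<^sup>\<dagger> \<cdot> E) \<cdot> (t \<cdot> t')" using tt' t E by simp
  also have "\<dots> = (t\<^sup>\<dagger> \<cdot> (E \<cdot> t)) \<cdot> t'" using t E by (simp add: comp_assoc)
  finally have "t\<^sup>\<dagger> \<cdot> E = t'" using tEt t by simp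
  then show left: "(t \<cdot> t\<^sup>\<dagger>) \<cdot> E = idt C X" using tt' t E by (simp add: comp_assoc)
  have "(t \<cdot> t\<^sup>\<dagger>)\<^sup>\<dagger> = t \<cdot> t\<^sup>\<dagger>" using t by simp
  then have "((t \<cdot> t\<^sup>\<dagger>) \<cdot> E)\<^sup>\<dagger> = E \<cdot> (t \<cdot> t\<^sup>\<dagger>)" using t E by simp
  then show "E \<cdot> (t \<cdot> t\<^sup>\<dagger>) = idt C X" using left E src_in_Ob[of E] by simp
qed

context cmon_enrichment
begin

text \<open>The isometric kernel of \<open>[-b, 1] : X \<oplus> W \<rightarrow> W\<close> is the graph of \<open>b\<close>, up to the
  isomorphism \<open>t\<close>; its isometry expresses \<open>t\<^sup>\<dagger> (1 + b\<^sup>\<dagger> b) t = 1\<close>.\<close>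

lemma graph_kernel:
  assumes b: "b \<in> Ar C" "src b = X"
  obtains K t t' where "t \<in> Hom K X" "t' \<in> Hom X K" "t \<cdot> t' = idt C X"
    "t\<^sup>\<dagger> \<cdot> ((idt C X \<boxplus> b\<^sup>\<dagger> \<cdot> b) \<cdot> t) = idt C K"
proof -
  define W where "W = trg b"
  have XW: "X \<in> Ob C" "W \<in> Ob C" using b W_def by auto
  obtain B s1 s2 where "orthonormal_biproduct C X W B s1 s2"
    using orthonormal_biproduct_exists XW by blast
  then have biprod: "orthonormal_biprod C X W B s1 s2"
    by (simp add: orthonormal_biprod_def orthonormal_biprod_axioms_def pre_hilbert_cat_axioms)
  interpret o: orthonormal_biprod C X W B s1 s2 by (rule biprod)
  obtain nb where nb: "nb \<in> Hom X W" "b \<boxplus> nb = zero_arr X W"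
    using add_inverse_exists[OF b(1)] b W_def by auto
  define q where "q = nb \<cdot> s1\<^sup>\<dagger> \<boxplus> s2\<^sup>\<dagger>"
  have q: "q \<in> Hom B W" unfolding q_def using nb by simp
  have qs2: "q \<cdot> s2 = idt C W"
    using add_comp[of "nb \<cdot> s1\<^sup>\<dagger>" "s2\<^sup>\<dagger>" s2] nb comp_assoc[of s2 "s1\<^sup>\<dagger>" nb] XW unfolding q_def by simp
  have "q \<cdot> (s1 \<boxplus> s2 \<cdot> b) = q \<cdot> s1 \<boxplus> (q \<cdot> s2) \<cdot> b"
    using comp_add[of s1 "s2 \<cdot> b" q] q b W_def comp_assoc[of b s2 q] by simp
  also have "\<dots> = zero_arr X W"
    using add_comp[of "nb \<cdot> s1\<^sup>\<dagger>" "s2\<^sup>\<dagger>" s1] nb comp_assoc[of s1 "s1\<^sup>\<dagger>" nb] qs2 b W_def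
      add_commute[of nb b] XW
    unfolding q_def by simp
  finally have q_graph: "q \<cdot> (s1 \<boxplus> s2 \<cdot> b) = zero_arr X W" .
  obtain m where m: "kernel C q m" "isometry C m" using isometric_kernel_exists q by auto
  define K where "K = src m"
  have m1: "m \<in> Hom K B" "q \<cdot> m = zero_arr K W" "m\<^sup>\<dagger> \<cdot> m = idt C K"
    using kernel_in_Ar[OF m(1)] q m(2) K_def unfolding isometry_def by simp_all
  define t where "t = s1\<^sup>\<dagger> \<cdot> m"
  have t: "t \<in> Hom K X" unfolding t_def using m1 by simp
  have s2m: "s2\<^sup>\<dagger> \<cdot> m \<in> Hom K W" using m1 by simp
  have "s2\<^sup>\<dagger> \<cdot> m \<boxplus> nb \<cdot> t = nb \<cdot> t \<boxplus> s2\<^sup>\<dagger> \<cdot> m" by (rule add_commute) (use nb t s2m in simp)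
  also have "\<dots> = q \<cdot> m"
    using add_comp[of "nb \<cdot> s1\<^sup>\<dagger>" "s2\<^sup>\<dagger>" m] nb m1(1) comp_assoc[of m "s1\<^sup>\<dagger>" nb]
    unfolding q_def t_def by simp
  also have "\<dots> = zero_arr K W" by (rule m1(2))
  finally have "s2\<^sup>\<dagger> \<cdot> m \<boxplus> nb \<cdot> t = zero_arr K W" .
  moreover have "b \<cdot> t \<boxplus> nb \<cdot> t = zero_arr K W"
  proof -
    have "b \<cdot> t \<boxplus> nb \<cdot> t = (b \<boxplus> nb) \<cdot> t" by (rule add_comp[symmetric]) (use nb b t W_def in simp_all)
    then show ?thesis using nb(2) t XW by simp
  qed
  ultimately have s2m_eq: "s2\<^sup>\<dagger> \<cdot> m = b \<cdot> t"
    using add_inverse_unique[of "s2\<^sup>\<dagger> \<cdot> m" "nb \<cdot> t" "b \<cdot> t"] s2m nb t b W_def by simp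
  have "m\<^sup>\<dagger> \<cdot> m = (s1\<^sup>\<dagger> \<cdot> m)\<^sup>\<dagger> \<cdot> (s1\<^sup>\<dagger> \<cdot> m) \<boxplus> (s2\<^sup>\<dagger> \<cdot> m)\<^sup>\<dagger> \<cdot> (s2\<^sup>\<dagger> \<cdot> m)"
    by (rule biprod_adj_comp_self[OF biprod]) (use m1 in simp_all)
  then have "idt C K = t\<^sup>\<dagger> \<cdot> t \<boxplus> (b \<cdot> t)\<^sup>\<dagger> \<cdot> (b \<cdot> t)"
    unfolding s2m_eq t_def[symmetric] m1(3) .
  also have "\<dots> = t\<^sup>\<dagger> \<cdot> ((idt C X \<boxplus> b\<^sup>\<dagger> \<cdot> b) \<cdot> t)"
    using comp_add[of t "(b\<^sup>\<dagger> \<cdot> b) \<cdot> t" "t\<^sup>\<dagger>"] add_comp[of "idt C X" "b\<^sup>\<dagger> \<cdot> b" t] t b XW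
    by (simp add: comp_assoc)
  finally have tEt: "t\<^sup>\<dagger> \<cdot> ((idt C X \<boxplus> b\<^sup>\<dagger> \<cdot> b) \<cdot> t) = idt C K" by simp
  have graph: "s1 \<boxplus> s2 \<cdot> b \<in> Ar C" "src (s1 \<boxplus> s2 \<cdot> b) = X" "trg (s1 \<boxplus> s2 \<cdot> b) = B"
    using b W_def by simp_all
  obtain t' where t': "t' \<in> Hom X K" "m \<cdot> t' = s1 \<boxplus> s2 \<cdot> b"
    using kernel_factors[OF m(1) graph(1)] graph q q_graph K_def by auto
  have "t \<cdot> t' = s1\<^sup>\<dagger> \<cdot> (s1 \<boxplus> s2 \<cdot> b)"
    using t' m1 unfolding t_def by (simp add: comp_assoc)
  also have "\<dots> = idt C X"
    using biprod_proj_sum(1)[OF biprod, of "idt C X" b] b W_def XW by simp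
  finally show ?thesis using that t t' tEt by blast
qed

lemma idt_add_adj_comp_self_invertible:
  assumes "b \<in> Ar C" "src b = X"
  obtains u where "u \<in> Hom X X" "u \<cdot> (idt C X \<boxplus> b\<^sup>\<dagger> \<cdot> b) = idt C X" "(idt C X \<boxplus> b\<^sup>\<dagger> \<cdot> b) \<cdot> u = idt C X"
proof -
  obtain K t t' where t: "t \<in> Hom K X" "t' \<in> Hom X K" "t \<cdot> t' = idt C X"
    "t\<^sup>\<dagger> \<cdot> ((idt C X \<boxplus> b\<^sup>\<dagger> \<cdot> b) \<cdot> t) = idt C K"
    by (rule graph_kernel[OF assms])
  have E: "idt C X \<boxplus> b\<^sup>\<dagger> \<cdot> b \<in> Hom X X" "(idt C X \<boxplus> b\<^sup>\<dagger> \<cdot> b)\<^sup>\<dagger> = idt C X \<boxplus> b\<^sup>\<dagger> \<cdot> b"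
    using assms src_in_Ob[of b] by simp_all
  show ?thesis using inverse_of_adj_congruent_idt[OF E t] that[of "t \<cdot> t\<^sup>\<dagger>"] t by simp
qed

lemma comp_left_group_hom:
  assumes "g \<in> Hom Y Z" "X \<in> Ob C"
  shows "(\<lambda>h. g \<cdot> h) \<in> Group.hom (hom_group X Y) (hom_group X Z)"
  unfolding Group.hom_def using assms by (auto intro: comp_add)

lemma comp_right_group_hom:
  assumes "f \<in> Hom X Y" "Z \<in> Ob C"
  shows "(\<lambda>h. h \<cdot> f) \<in> Group.hom (hom_group Y Z) (hom_group X Z)"
  unfolding Group.hom_def using assms by (auto intro: add_comp)

lemma adj_group_hom:
  assumes "X \<in> Ob C" "Y \<in> Ob C"
  shows "(\<lambda>h. h\<^sup>\<dagger>) \<in> Group.hom (hom_group X Y) (hom_group Y X)"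
  unfolding Group.hom_def using assms by auto

lemma int_pow_hom_group_eq_comp:
  assumes f: "f \<in> Hom X Y"
  shows "f [^]\<^bsub>hom_group X Y\<^esub> (k::int) = (idt C Y [^]\<^bsub>hom_group Y Y\<^esub> k) \<cdot> f"
proof -
  have XY: "X \<in> Ob C" "Y \<in> Ob C" using f by auto
  interpret G: comm_group "hom_group Y Y" using comm_group_hom_group XY by simp
  interpret H: comm_group "hom_group X Y" using comm_group_hom_group XY by simp
  have "(idt C Y [^]\<^bsub>hom_group Y Y\<^esub> k) \<cdot> f = (idt C Y \<cdot> f) [^]\<^bsub>hom_group X Y\<^esub> k"
    using hom_int_pow[OF comp_right_group_hom[OF f XY(2)]] G.is_group H.is_group f XY by simp
  then show ?thesis using f by simp
qed

lemma nat_pow_idt_eq_adj_comp_self: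
  assumes X: "X \<in> Ob C"
  obtains c where "c \<in> Ar C" "src c = X" "c\<^sup>\<dagger> \<cdot> c = idt C X [^]\<^bsub>hom_group X X\<^esub> (k::nat)"
proof -
  interpret G: comm_group "hom_group X X" using comm_group_hom_group X by simp
  have "\<exists>c \<in> Ar C. src c = X \<and> c\<^sup>\<dagger> \<cdot> c = idt C X [^]\<^bsub>hom_group X X\<^esub> k"
  proof (induction k)
    case 0
    show ?case using X by (intro bexI[of _ "zero_arr X X"]) simp_all
  next
    case (Suc k)
    then obtain c where c: "c \<in> Ar C" "src c = X" "c\<^sup>\<dagger> \<cdot> c = idt C X [^]\<^bsub>hom_group X X\<^esub> k" by blast
    obtain B s1 s2 where "orthonormal_biproduct C (trg c) X B s1 s2"
      using orthonormal_biproduct_exists[of "trg c" X] X c by auto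
    then have biprod: "orthonormal_biprod C (trg c) X B s1 s2"
      by (simp add: orthonormal_biprod_def orthonormal_biprod_axioms_def pre_hilbert_cat_axioms)
    interpret o: orthonormal_biprod C "trg c" X B s1 s2 by (rule biprod)
    define c' where "c' = s1 \<cdot> c \<boxplus> s2"
    have c': "c' \<in> Ar C" "src c' = X" "trg c' = B" unfolding c'_def using c by simp_all
    have "s1\<^sup>\<dagger> \<cdot> c' = c" "s2\<^sup>\<dagger> \<cdot> c' = idt C X"
      using biprod_proj_sum[OF biprod, of c "idt C X"] c X unfolding c'_def by simp_all
    then have "c'\<^sup>\<dagger> \<cdot> c' = c\<^sup>\<dagger> \<cdot> c \<boxplus> idt C X" using biprod_adj_comp_self[OF biprod c'(1,3)] X by simp
    then show ?case using c c' by auto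
  qed
  then show ?thesis using that by blast
qed

lemma int_pow_idt_invertible:
  assumes X: "X \<in> Ob C" and k: "(k::int) > 0"
  obtains u where "u \<in> Hom X X" "u \<cdot> idt C X [^]\<^bsub>hom_group X X\<^esub> k = idt C X"
    "idt C X [^]\<^bsub>hom_group X X\<^esub> k \<cdot> u = idt C X"
proof -
  interpret G: comm_group "hom_group X X" using comm_group_hom_group X by simp
  obtain m where m: "k = int (Suc m)" using k by (metis gr0_implies_Suc pos_int_cases)
  obtain c where c: "c \<in> Ar C" "src c = X" "c\<^sup>\<dagger> \<cdot> c = idt C X [^]\<^bsub>hom_group X X\<^esub> m"
    using nat_pow_idt_eq_adj_comp_self[OF X] by blast
  have "idt C X [^]\<^bsub>hom_group X X\<^esub> k = idt C X [^]\<^bsub>hom_group X X\<^esub> Suc m"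
    unfolding m by (rule int_pow_int)
  also have "\<dots> = c\<^sup>\<dagger> \<cdot> c \<boxplus> idt C X" using c(3) by simp
  also have "\<dots> = idt C X \<boxplus> c\<^sup>\<dagger> \<cdot> c" by (rule add_commute) (use c(1,2) X in simp)
  finally show ?thesis using idt_add_adj_comp_self_invertible[OF c(1,2)] that by metis
qed

lemma uniquely_divisible_hom_group:
  assumes XY: "X \<in> Ob C" "Y \<in> Ob C"
  shows "uniquely_divisible (hom_group X Y)"
  unfolding uniquely_divisible_def
proof (intro allI impI)
  fix k :: int assume "k > 0"
  then obtain u where u: "u \<in> Hom Y Y" "u \<cdot> idt C Y [^]\<^bsub>hom_group Y Y\<^esub> k = idt C Y"
    "idt C Y [^]\<^bsub>hom_group Y Y\<^esub> k \<cdot> u = idt C Y"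
    using int_pow_idt_invertible[OF XY(2)] by blast
  let ?p = "idt C Y [^]\<^bsub>hom_group Y Y\<^esub> k"
  interpret G: comm_group "hom_group Y Y" using comm_group_hom_group XY by simp
  have p: "?p \<in> Hom Y Y" using G.int_pow_closed[of "idt C Y" k] XY by simp
  have pow: "x [^]\<^bsub>hom_group X Y\<^esub> k = ?p \<cdot> x" if "x \<in> Hom X Y" for x
    using int_pow_hom_group_eq_comp[OF that] .
  show "bij_betw (\<lambda>x. x [^]\<^bsub>hom_group X Y\<^esub> k) (carrier (hom_group X Y)) (carrier (hom_group X Y))"
  proof (rule bij_betw_byWitness[where f' = "\<lambda>x. u \<cdot> x"]; intro ballI subsetI)
    fix x assume x: "x \<in> carrier (hom_group X Y)"
    then show "u \<cdot> x [^]\<^bsub>hom_group X Y\<^esub> k = x" using u p pow[of x] comp_assoc[of x ?p u] by simp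
    show "(u \<cdot> x) [^]\<^bsub>hom_group X Y\<^esub> k = x" using x u p pow[of "u \<cdot> x"] comp_assoc[of x u ?p] by simp
  next
    fix y assume "y \<in> (\<lambda>x. x [^]\<^bsub>hom_group X Y\<^esub> k) ` carrier (hom_group X Y)"
    then show "y \<in> carrier (hom_group X Y)" using p pow by auto
  next
    fix y assume "y \<in> (\<lambda>x. u \<cdot> x) ` carrier (hom_group X Y)"
    then show "y \<in> carrier (hom_group X Y)" using u by auto
  qed
qed

end

section \<open>The rational structure\<close>

lemma rat_vector_space_on_cong:
  assumes "rat_vector_space_on H add s" "\<And>q x. x \<in> H \<Longrightarrow> s' q x = s q x"
  shows "rat_vector_space_on H add s'"
proof -
  have closed: "\<And>q x. x \<in> H \<Longrightarrow> s q x \<in> H" using assms(1) unfolding rat_vector_space_on_def by blast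
  have add_closed: "\<And>x y. x \<in> H \<Longrightarrow> y \<in> H \<Longrightarrow> add x y \<in> H"
    using assms(1) unfolding rat_vector_space_on_def ab_group_on_def by auto
  show ?thesis using assms(1) unfolding rat_vector_space_on_def by (simp add: assms(2) closed add_closed)
qed

context cmon_enrichment
begin

lemma group_hom_rat_pow:
  assumes "h \<in> Group.hom (hom_group X Y) (hom_group X' Y')" "X' \<in> Ob C" "Y' \<in> Ob C" "f \<in> Hom X Y"
  shows "h (rat_pow (hom_group X Y) q f) = rat_pow (hom_group X' Y') q (h f)"
  by (rule comm_group.hom_rat_pow)
    (use assms in \<open>auto simp: comm_group_hom_group uniquely_divisible_hom_group\<close>)

definition rat_smult :: "rat \<Rightarrow> 'm \<Rightarrow> 'm" where
  "rat_smult q f = rat_pow (hom_group (src f) (trg f)) q f"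

lemma ab_enriched: "ab_enriched C add"
  unfolding ab_enriched_def
  using comm_group.ab_group_on_carrier[OF comm_group_hom_group] comp_add add_comp by simp

lemma rat_linear_rat_smult: "rat_linear C add rat_smult"
proof -
  have "rat_vector_space_on (Hom X Y) add rat_smult" if XY: "X \<in> Ob C" "Y \<in> Ob C" for X Y
  proof (rule rat_vector_space_on_cong)
    show "rat_vector_space_on (Hom X Y) add (rat_pow (hom_group X Y))"
      using comm_group.rat_vector_space_on_rat_pow[OF comm_group_hom_group uniquely_divisible_hom_group] XY
      by simp
  qed (simp add: rat_smult_def)
  moreover have "g \<cdot> rat_smult q f = rat_smult q (g \<cdot> f)" "rat_smult q g \<cdot> f = rat_smult q (g \<cdot> f)"
    if "f \<in> Hom X Y" "g \<in> Hom Y Z" for X Y Z f g q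
  proof -
    have XYZ: "X \<in> Ob C" "Y \<in> Ob C" "Z \<in> Ob C" using that by auto
    show "g \<cdot> rat_smult q f = rat_smult q (g \<cdot> f)"
      using group_hom_rat_pow[OF comp_left_group_hom[OF that(2) XYZ(1)] XYZ(1,3) that(1)] that
      by (simp add: rat_smult_def)
    show "rat_smult q g \<cdot> f = rat_smult q (g \<cdot> f)"
      using group_hom_rat_pow[OF comp_right_group_hom[OF that(1) XYZ(3)] XYZ(1,3) that(2)] that
      by (simp add: rat_smult_def)
  qed
  ultimately show ?thesis unfolding rat_linear_def using ab_enriched by blast
qed

lemma adj_rat_smult:
  assumes "f \<in> Ar C"
  shows "(rat_smult q f)\<^sup>\<dagger> = rat_smult q (f\<^sup>\<dagger>)"
proof -
  have XY: "src f \<in> Ob C" "trg f \<in> Ob C" using assms by simp_all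
  show ?thesis using group_hom_rat_pow[OF adj_group_hom[OF XY] XY(2,1), of f] assms
    by (simp add: rat_smult_def)
qed

lemma rat_linear_unique:
  assumes "rat_linear C add s" "f \<in> Ar C"
  shows "s q f = rat_smult q f"
proof -
  have "rat_vector_space_on (Hom (src f) (trg f)) add s" using assms unfolding rat_linear_def by simp
  then show ?thesis
    using comm_group.rat_vector_space_on_unique[OF comm_group_hom_group uniquely_divisible_hom_group] assms(2)
    by (simp add: rat_smult_def)
qed

end

lemma ab_group_on_idempotent_unit:
  assumes "ab_group_on H add" "z \<in> H" "add z z = z" "x \<in> H"
  shows "add z x = x"
proof -
  obtain e where e: "e \<in> H" "\<forall>x \<in> H. add e x = x" "\<forall>x \<in> H. \<exists>y \<in> H. add x y = e"
    using assms(1) unfolding ab_group_on_def by blast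
  have assoc: "\<forall>x \<in> H. \<forall>y \<in> H. \<forall>w \<in> H. add (add x y) w = add x (add y w)"
    and comm: "\<forall>x \<in> H. \<forall>y \<in> H. add x y = add y x"
    using assms(1) unfolding ab_group_on_def by blast+
  obtain y where y: "y \<in> H" "add z y = e" using e assms(2) by blast
  have "e = add (add z z) y" using assms(3) y by simp
  also have "\<dots> = add z e" using assoc assms(2) y by simp
  also have "\<dots> = z" using comm e assms(2) by metis
  finally show ?thesis using e assms(4) by simp
qed

lemma (in pre_hilbert_cat) cmon_enrichment_if_ab_enriched:
  assumes ab: "ab_enriched C add"
  shows "cmon_enrichment C add"
proof -
  have group: "ab_group_on (Hom (src f) (trg f)) add" if "f \<in> Ar C" for f
    using ab that unfolding ab_enriched_def by simp
  have closed: "add f g \<in> Ar C" "src (add f g) = src f" "trg (add f g) = trg f"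
    and assoc: "par f h \<Longrightarrow> add (add f g) h = add f (add g h)"
    and commute: "add f g = add g f"
    if "par f g" for f g h
    using group[of f] that unfolding ab_group_on_def by auto
  have bilinear: "g \<cdot> add f f' = add (g \<cdot> f) (g \<cdot> f')" "add g g' \<cdot> f = add (g \<cdot> f) (g' \<cdot> f)"
    if "f \<in> Hom X Y" "f' \<in> Hom X Y" "g \<in> Hom Y Z" "g' \<in> Hom Y Z" for f f' g g' X Y Z
  proof -
    have "X \<in> Ob C" "Y \<in> Ob C" "Z \<in> Ob C" using that by auto
    then have "\<forall>f \<in> Hom X Y. \<forall>f' \<in> Hom X Y. \<forall>g \<in> Hom Y Z. \<forall>g' \<in> Hom Y Z.
        g \<cdot> add f f' = add (g \<cdot> f) (g \<cdot> f') \<and> add g g' \<cdot> f = add (g \<cdot> f) (g' \<cdot> f)"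
      using ab unfolding ab_enriched_def by blast
    then show "g \<cdot> add f f' = add (g \<cdot> f) (g \<cdot> f')" "add g g' \<cdot> f = add (g \<cdot> f) (g' \<cdot> f)"
      using that by blast+
  qed
  \<comment> \<open>a zero arrow factors through a zero object, whose hom-sets are singletons, so it is idempotent\<close>
  have unit: "add (zero_arr (src f) (trg f)) f = f" if f: "f \<in> Ar C" for f
  proof -
    let ?X = "src f" and ?Y = "trg f"
    have XY: "?X \<in> Ob C" "?Y \<in> Ob C" using f by auto
    obtain Z a b where Z: "zero_object C Z" "a \<in> Hom ?X Z" "b \<in> Hom Z ?Y" "zero_arr ?X ?Y = b \<cdot> a"
      using zero_arr_factors[OF XY] by blast
    have "add b b \<in> Hom Z ?Y" using closed[of b b] Z(3) by simp
    moreover have "\<exists>!h. h \<in> Hom Z ?Y" using Z(1) XY unfolding zero_object_def by blast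
    ultimately have bb: "add b b = b" using Z(3) by blast
    have "add (b \<cdot> a) (b \<cdot> a) = add b b \<cdot> a" by (rule bilinear(2)[OF Z(2,2,3,3), symmetric])
    then have "add (zero_arr ?X ?Y) (zero_arr ?X ?Y) = zero_arr ?X ?Y" unfolding bb Z(4) .
    from ab_group_on_idempotent_unit[OF group[OF f] zero_arr_in_Hom[OF XY] this] f show ?thesis by simp
  qed
  show ?thesis
    unfolding cmon_enrichment_def cmon_enrichment_axioms_def
  proof (intro conjI allI impI pre_hilbert_cat_axioms)
    fix f f' g assume "par f f'" "g \<in> Ar C" "src g = trg f"
    then show "g \<cdot> add f f' = add (g \<cdot> f) (g \<cdot> f')" using bilinear(1)[of f "src f" "trg f" f' g "trg g"] by simp
  next
    fix g g' f assume "par g g'" "f \<in> Ar C" "src g = trg f"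
    then show "add g g' \<cdot> f = add (g \<cdot> f) (g' \<cdot> f)" using bilinear(2)[of f "src f" "trg f" f g "trg g" g'] by simp
  next
    fix f g h assume "par f g" "par f h"
    then show "add (add f g) h = add f (add g h)" by (rule assoc)
  next
    fix f g assume fg: "par f g"
    show "add f g \<in> Ar C" "src (add f g) = src f" "trg (add f g) = trg f" using closed[OF fg] by simp_all
    show "add f g = add g f" using commute[OF fg] .
  next
    fix f assume "f \<in> Ar C"
    then show "add (zero_arr (src f) (trg f)) f = f" by (rule unit)
  qed
qed

theorem corollary6p7:
  fixes C :: "('o, 'm) star_cat"
  assumes "pre_hilbert C"
  shows "(\<exists>add. ab_enriched C add) \<and>
         (\<forall>add. ab_enriched C add \<longrightarrow>
            (\<exists>smul. rat_linear C add smul \<and>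
                    (\<forall>f \<in> Ar C. \<forall>q. star C (smul q f) = smul q (star C f))) \<and>
            (\<forall>smul1 smul2. rat_linear C add smul1 \<longrightarrow> rat_linear C add smul2 \<longrightarrow>
                    (\<forall>f \<in> Ar C. \<forall>q. smul1 q f = smul2 q f)))"
proof -
  interpret pre_hilbert_cat C using assms by (unfold_locales)
  have "ab_enriched C sum_copair" using cmon_enrichment.ab_enriched[OF cmon_enrichment_sum_copair] .
  moreover have "(\<exists>smul. rat_linear C add smul \<and> (\<forall>f \<in> Ar C. \<forall>q. (smul q f)\<^sup>\<dagger> = smul q (f\<^sup>\<dagger>))) \<and>
      (\<forall>smul1 smul2. rat_linear C add smul1 \<longrightarrow> rat_linear C add smul2 \<longrightarrow>
        (\<forall>f \<in> Ar C. \<forall>q. smul1 q f = smul2 q f))"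
    if "ab_enriched C add" for add
  proof -
    interpret cmon_enrichment C add using cmon_enrichment_if_ab_enriched[OF that] .
    have "\<forall>f \<in> Ar C. \<forall>q. (rat_smult q f)\<^sup>\<dagger> = rat_smult q (f\<^sup>\<dagger>)" using adj_rat_smult by blast
    moreover have "s1 q f = s2 q f" if "rat_linear C add s1" "rat_linear C add s2" "f \<in> Ar C" for s1 s2 f q
      using rat_linear_unique[OF that(1,3)] rat_linear_unique[OF that(2,3)] by (rule trans[OF _ sym])
    ultimately show ?thesis using rat_linear_rat_smult by blast
  qed
  ultimately show ?thesis by blast
qed

end
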